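(* Let $\mathcal C$ be a category and $n\ge0$. Let $X\in Z^n(\mathcal C)$ be a globular object, let $\mathcal S=(X,\{f_i:A_i\to X\}_{i\in I})$ be a sink of regularly normalising maps, and let $d:N\to X$ be the relative normalisation of $X$ with respect to $\mathcal S$, with factorisations $f_i=d\circ g_i$. Then $N$ is a globular object, the factorisation maps $g_i:A_i\to N$ are globular maps, and $d$ is regularly normalising.
   Context: Notation: for $n\ge 0$, $[n]$ denotes $\{0,\dots,n-1\}$; $\Delta_+$ is the category of these finite total orders and order-preserving maps. For monotone $\varphi:[n]\to[m]$ define $\hat\varphi:[m+1]\to[n+1]$ by $\hat\varphi(i)=\min(\{j\in[n]:\varphi(j)\ge i\}\cup\{n\})$. Zigzags: in a category $\mathcal C$, a zigzag $X$ of length $n$ is a diagram $X(r_0)\xrightarrow{x_0} X(s_0)\xleftarrow{x'_0} X(r_1)\to\cdots\xrightarrow{x_{n-1}} X(s_{n-1})\xleftarrow{x'_{n-1}} X(r_n)$. A zigzag map $f:X\to Y$ (lengths $n$, $m$) consists of a monotone $f_s:[n]\to[m]$, regular slices $f(r_i):X(r_{\hat{f_s}(i)})\to Y(r_i)$ for $0\le i\le m$ and singular slices $f(s_j):X(s_j)\to Y(s_{f_s(j)})$ for $0\le j<n$, such that for each $0\le i<m$: if $f_s^{-1}(i)\neq\emptyset$ with least element $p$, greatest $q$, then $f(s_p)\circ x_p=y_i\circ f(r_i)$, $f(s_q)\circ x'_q=y'_i\circ f(r_{i+1})$, $f(s_j)\circ x'_j=f(s_{j+1})\circ x_{j+1}$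 for $p\le j<q$; if $f_s^{-1}(i)=\emptyset$ then $y_i\circ f(r_i)=y'_i\circ f(r_{i+1})$. Composition: $(g\circ f)_s=g_s\circ f_s$, $(g\circ f)(s_j)=g(s_{f_s(j)})\circ f(s_j)$, $(g\circ f)(r_i)=g(r_i)\circ f(r_{\hat{g_s}(i)})$. This gives a category $Z(\mathcal C)$; $Z^0(\mathcal C)=\mathcal C$, $Z^n(\mathcal C)=Z(Z^{n-1}(\mathcal C))$. $\pi:Z(\mathcal C)\to\Delta_+$ sends a zigzag of length $n$ to $[n]$ and $f$ to $f_s$; $f$ is $\pi$-vertical if $\pi(f)$ is an identity; $f:x\to y$ is $\pi$-cocartesian if for every $h:x\to y'$ and $u:\pi(y)\to\pi(y')$ with $u\circ\pi(f)=\pi(h)$ there is a unique $v:y\to y'$ with $v\circ f=h$, $\pi(v)=u$. Degeneracy maps in $Z^n(\mathcal C)$ (by induction on $n$): in $Z^0(\mathcal C)$ the isomorphisms; for $n\ge1$ the maps generated under composition by simple degeneracy maps (the $\pi$-cocartesian maps $f$ with $\pi(f)$ a monomorphism of $\Delta_+$) and parallel degeneracy maps (the $\pi$-vertical maps whose regular and singular slices are all degeneracy maps in $Z^{n-1}(\mathcal C)$). Degeneracy maps are monomorphisms; $\mathrm{Deg}(T)$ is the subposet of the subobject poset $\mathrm{Sub}(T)$ of subobjects represented by a degeneracy map into $T$. A normalising map into $T$ is a degeneracy map representing the smallest element of $\mathrm{Deg}(T)$. A sink is $\mathcal S=(T,\{f_i:A_i\to T\}_{i\in I})$; $\mathrm{Deg}_{\mathcal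 S}(T)\subseteq\mathrm{Deg}(T)$ consists of the subobjects represented by degeneracy maps $d:N\to T$ such that every $f_i$ factors as $f_i=d\circ g_i$; the relative normalisation of $T$ with respect to $\mathcal S$ is a degeneracy map $d:N\to T$ representing the smallest element of $\mathrm{Deg}_{\mathcal S}(T)$. Globularity: a map $f$ in $Z^n(\mathcal C)$ is globular if $n=0$, or if all regular slices of $f$ are isomorphisms and all singular slices are globular maps in $Z^{n-1}(\mathcal C)$. An object of $Z^n(\mathcal C)$ is globular if $n=0$, or if it is a zigzag in $Z^{n-1}(\mathcal C)$ of globular objects and globular maps. A map in $Z^n(\mathcal C)$ is regularly normalising if $n=0$, or if all its regular slices are normalising maps (in $Z^{n-1}(\mathcal C)$) and all its singular slices are regularly normalising. *)

theory Defs
  imports Main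
begin

text \<open>A category presented by its objects, arrows, domain, codomain, composition
  (cComp g f = g o f) and identities.\<close>

record ('o, 'm) cat =
  cObj  :: "'o set"
  cArr  :: "'m set"
  cDom  :: "'m \<Rightarrow> 'o"
  cCod  :: "'m \<Rightarrow> 'o"
  cComp :: "'m \<Rightarrow> 'm \<Rightarrow> 'm"
  cId   :: "'o \<Rightarrow> 'm"

definition is_category :: "('o, 'm) cat \<Rightarrow> bool" where
  "is_category C \<longleftrightarrow>
     (\<forall>f \<in> cArr C. cDom C f \<in> cObj C \<and> cCod C f \<in> cObj C) \<and>
     (\<forall>a \<in> cObj C. cId C a \<in> cArr C \<and> cDom C (cId C a) = a \<and> cCod C (cId C a) = a) \<and>
     (\<forall>f \<in> cArr C. \<forall>g \<in> cArr C. cDom C g = cCod C f \<longrightarrow>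
        cComp C g f \<in> cArr C \<and> cDom C (cComp C g f) = cDom C f \<and> cCod C (cComp C g f) = cCod C g) \<and>
     (\<forall>f \<in> cArr C. \<forall>g \<in> cArr C. \<forall>h \<in> cArr C. cDom C g = cCod C f \<longrightarrow> cDom C h = cCod C g \<longrightarrow>
        cComp C h (cComp C g f) = cComp C (cComp C h g) f) \<and>
     (\<forall>f \<in> cArr C. cComp C f (cId C (cDom C f)) = f \<and> cComp C (cId C (cCod C f)) f = f)"

definition iso :: "('o, 'm) cat \<Rightarrow> 'm \<Rightarrow> bool" where
  "iso C f \<longleftrightarrow> f \<in> cArr C \<and> (\<exists>g \<in> cArr C. cDom C g = cCod C f \<and> cCod C g = cDom C f \<and>
      cComp C g f = cId C (cDom C f) \<and> cComp C f g = cId C (cCod C f))"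

definition factors_through :: "('o, 'm) cat \<Rightarrow> 'm \<Rightarrow> 'm \<Rightarrow> bool" where
  "factors_through C f d \<longleftrightarrow> (\<exists>g \<in> cArr C. cDom C g = cDom C f \<and> cCod C g = cDom C d \<and> cComp C d g = f)"

text \<open>ZZ rs ss xs ys is the zigzag with regular objects rs (length n+1),
  singular objects ss (length n), forward maps xs (x_i : r_i -> s_i) and
  backward maps ys (x'_i : r_{i+1} -> s_i).
  ZM X Y fs fr fsg is a zigzag map X -> Y with singular-height map f_s given by the
  list fs (f_s(j) = fs!j), regular slices fr and singular slices fsg.\<close>

datatype ('o, 'm) zo = ZBase 'o | ZZ "('o, 'm) zo list" "('o, 'm) zo list" "('o, 'm) zm list" "('o, 'm) zm list"
     and ('o, 'm) zm = MBase 'm | ZM "('o, 'm) zo" "('o, 'm) zo" "nat list" "('o, 'm) zm list" "('o, 'm) zm list"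

definition zlen :: "('o, 'm) zo \<Rightarrow> nat" where
  "zlen X = (case X of ZZ rs ss xs ys \<Rightarrow> length ss | _ \<Rightarrow> undefined)"
definition zr :: "('o, 'm) zo \<Rightarrow> nat \<Rightarrow> ('o, 'm) zo" where
  "zr X i = (case X of ZZ rs ss xs ys \<Rightarrow> rs ! i | _ \<Rightarrow> undefined)"
definition zs :: "('o, 'm) zo \<Rightarrow> nat \<Rightarrow> ('o, 'm) zo" where
  "zs X j = (case X of ZZ rs ss xs ys \<Rightarrow> ss ! j | _ \<Rightarrow> undefined)"
definition zx :: "('o, 'm) zo \<Rightarrow> nat \<Rightarrow> ('o, 'm) zm" where
  "zx X j = (case X of ZZ rs ss xs ys \<Rightarrow> xs ! j | _ \<Rightarrow> undefined)"
definition zy :: "('o, 'm) zo \<Rightarrow> nat \<Rightarrow> ('o, 'm) zm" where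
  "zy X j = (case X of ZZ rs ss xs ys \<Rightarrow> ys ! j | _ \<Rightarrow> undefined)"

definition mdom :: "('o, 'm) zm \<Rightarrow> ('o, 'm) zo" where
  "mdom f = (case f of ZM X Y fs fr fsg \<Rightarrow> X | _ \<Rightarrow> undefined)"
definition mcod :: "('o, 'm) zm \<Rightarrow> ('o, 'm) zo" where
  "mcod f = (case f of ZM X Y fs fr fsg \<Rightarrow> Y | _ \<Rightarrow> undefined)"
definition msing_map :: "('o, 'm) zm \<Rightarrow> nat list" where
  "msing_map f = (case f of ZM X Y fs fr fsg \<Rightarrow> fs | _ \<Rightarrow> undefined)"
definition mreg :: "('o, 'm) zm \<Rightarrow> nat \<Rightarrow> ('o, 'm) zm" where
  "mreg f i = (case f of ZM X Y fs fr fsg \<Rightarrow> fr ! i | _ \<Rightarrow> undefined)"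
definition msing :: "('o, 'm) zm \<Rightarrow> nat \<Rightarrow> ('o, 'm) zm" where
  "msing f j = (case f of ZM X Y fs fr fsg \<Rightarrow> fsg ! j | _ \<Rightarrow> undefined)"

text \<open>Monotone maps [n] -> [m] of Delta_+ are lists of length n, sorted, with entries < m.\<close>
definition delta_map :: "nat list \<Rightarrow> nat \<Rightarrow> nat \<Rightarrow> bool" where
  "delta_map \<phi> n m \<longleftrightarrow> length \<phi> = n \<and> sorted \<phi> \<and> (\<forall>j < n. \<phi> ! j < m)"

definition hat :: "nat list \<Rightarrow> nat \<Rightarrow> nat" where
  "hat \<phi> i = Min ({j. j < length \<phi> \<and> \<phi> ! j \<ge> i} \<union> {length \<phi>})"

definition zig_obj :: "(('o, 'm) zo, ('o, 'm) zm) cat \<Rightarrow> ('o, 'm) zo \<Rightarrow> bool" where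
  "zig_obj D X \<longleftrightarrow> (\<exists>rs ss xs ys. X = ZZ rs ss xs ys \<and>
      length rs = Suc (length ss) \<and> length xs = length ss \<and> length ys = length ss \<and>
      set rs \<subseteq> cObj D \<and> set ss \<subseteq> cObj D \<and>
      (\<forall>i < length ss. xs ! i \<in> cArr D \<and> cDom D (xs ! i) = rs ! i \<and> cCod D (xs ! i) = ss ! i \<and>
                       ys ! i \<in> cArr D \<and> cDom D (ys ! i) = rs ! Suc i \<and> cCod D (ys ! i) = ss ! i))"

definition zig_map :: "(('o, 'm) zo, ('o, 'm) zm) cat \<Rightarrow> ('o, 'm) zm \<Rightarrow> bool" where
  "zig_map D f \<longleftrightarrow> (\<exists>X Y fs fr fsg. f = ZM X Y fs fr fsg \<and>
      zig_obj D X \<and> zig_obj D Y \<and>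
      delta_map fs (zlen X) (zlen Y) \<and>
      length fr = Suc (zlen Y) \<and> length fsg = zlen X \<and>
      (\<forall>i \<le> zlen Y. fr ! i \<in> cArr D \<and> cDom D (fr ! i) = zr X (hat fs i) \<and> cCod D (fr ! i) = zr Y i) \<and>
      (\<forall>j < zlen X. fsg ! j \<in> cArr D \<and> cDom D (fsg ! j) = zs X j \<and> cCod D (fsg ! j) = zs Y (fs ! j)) \<and>
      (\<forall>i < zlen Y.
         (let P = {j. j < zlen X \<and> fs ! j = i} in
          if P \<noteq> {} then
            (cComp D (fsg ! Min P) (zx X (Min P)) = cComp D (zx Y i) (fr ! i) \<and>
             cComp D (fsg ! Max P) (zy X (Max P)) = cComp D (zy Y i) (fr ! Suc i) \<and>
             (\<forall>j. Min P \<le> j \<and> j < Max P \<longrightarrow>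
                 cComp D (fsg ! j) (zy X j) = cComp D (fsg ! Suc j) (zx X (Suc j))))
          else cComp D (zx Y i) (fr ! i) = cComp D (zy Y i) (fr ! Suc i))))"

definition zig_comp :: "(('o, 'm) zo, ('o, 'm) zm) cat \<Rightarrow> ('o, 'm) zm \<Rightarrow> ('o, 'm) zm \<Rightarrow> ('o, 'm) zm" where
  "zig_comp D g f =
     ZM (mdom f) (mcod g)
        (map (\<lambda>j. msing_map g ! (msing_map f ! j)) [0..<length (msing_map f)])
        (map (\<lambda>i. cComp D (mreg g i) (mreg f (hat (msing_map g) i))) [0..<Suc (zlen (mcod g))])
        (map (\<lambda>j. cComp D (msing g (msing_map f ! j)) (msing f j)) [0..<length (msing_map f)])"

definition zig_id :: "(('o, 'm) zo, ('o, 'm) zm) cat \<Rightarrow> ('o, 'm) zo \<Rightarrow> ('o, 'm) zm" where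
  "zig_id D X = ZM X X [0..<zlen X] (map (\<lambda>i. cId D (zr X i)) [0..<Suc (zlen X)])
                                     (map (\<lambda>j. cId D (zs X j)) [0..<zlen X])"

definition Z :: "(('o, 'm) zo, ('o, 'm) zm) cat \<Rightarrow> (('o, 'm) zo, ('o, 'm) zm) cat" where
  "Z D = \<lparr> cObj = {X. zig_obj D X}, cArr = {f. zig_map D f}, cDom = mdom, cCod = mcod,
           cComp = zig_comp D, cId = zig_id D \<rparr>"

definition lift :: "('o, 'm) cat \<Rightarrow> (('o, 'm) zo, ('o, 'm) zm) cat" where
  "lift C = \<lparr> cObj = ZBase ` cObj C, cArr = MBase ` cArr C,
     cDom = (\<lambda>f. case f of MBase m \<Rightarrow> ZBase (cDom C m) | _ \<Rightarrow> undefined),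
     cCod = (\<lambda>f. case f of MBase m \<Rightarrow> ZBase (cCod C m) | _ \<Rightarrow> undefined),
     cComp = (\<lambda>g f. case g of MBase g' \<Rightarrow> (case f of MBase f' \<Rightarrow> MBase (cComp C g' f') | _ \<Rightarrow> undefined)
                             | _ \<Rightarrow> undefined),
     cId = (\<lambda>a. case a of ZBase a' \<Rightarrow> MBase (cId C a') | _ \<Rightarrow> undefined) \<rparr>"

definition Zn :: "('o, 'm) cat \<Rightarrow> nat \<Rightarrow> (('o, 'm) zo, ('o, 'm) zm) cat" where
  "Zn C n = (Z ^^ n) (lift C)"

section \<open>The projection pi : Z(D) -> Delta_+\<close>

definition pi_vertical :: "('o, 'm) zm \<Rightarrow> bool" where
  "pi_vertical f \<longleftrightarrow> zlen (mcod f) = zlen (mdom f) \<and> msing_map f = [0..<zlen (mdom f)]"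

definition pi_cocartesian :: "(('o, 'm) zo, ('o, 'm) zm) cat \<Rightarrow> ('o, 'm) zm \<Rightarrow> bool" where
  "pi_cocartesian D f \<longleftrightarrow>
     (\<forall>h \<in> cArr (Z D). mdom h = mdom f \<longrightarrow>
        (\<forall>u. delta_map u (zlen (mcod f)) (zlen (mcod h)) \<and>
             map (\<lambda>j. u ! (msing_map f ! j)) [0..<zlen (mdom f)] = msing_map h \<longrightarrow>
           (\<exists>!v. v \<in> cArr (Z D) \<and> mdom v = mcod f \<and> mcod v = mcod h \<and>
                 zig_comp D v f = h \<and> msing_map v = u)))"

definition delta_mono :: "nat list \<Rightarrow> bool" where
  "delta_mono \<phi> \<longleftrightarrow> sorted_wrt (<) \<phi>"

inductive comp_closure :: "('o, 'm) cat \<Rightarrow> ('m \<Rightarrow> bool) \<Rightarrow> 'm \<Rightarrow> bool"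
  for C :: "('o, 'm) cat" and P :: "'m \<Rightarrow> bool" where
  gen: "f \<in> cArr C \<Longrightarrow> P f \<Longrightarrow> comp_closure C P f"
| comp: "comp_closure C P f \<Longrightarrow> comp_closure C P g \<Longrightarrow> cDom C g = cCod C f \<Longrightarrow>
         comp_closure C P (cComp C g f)"

definition simple_deg :: "(('o, 'm) zo, ('o, 'm) zm) cat \<Rightarrow> ('o, 'm) zm \<Rightarrow> bool" where
  "simple_deg D f \<longleftrightarrow> f \<in> cArr (Z D) \<and> pi_cocartesian D f \<and> delta_mono (msing_map f)"

definition parallel_deg :: "(('o, 'm) zo, ('o, 'm) zm) cat \<Rightarrow> (('o, 'm) zm \<Rightarrow> bool) \<Rightarrow> ('o, 'm) zm \<Rightarrow> bool" where
  "parallel_deg D P f \<longleftrightarrow> f \<in> cArr (Z D) \<and> pi_vertical f \<and>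
     (\<forall>i \<le> zlen (mcod f). P (mreg f i)) \<and> (\<forall>j < zlen (mdom f). P (msing f j))"

primrec deg :: "('o, 'm) cat \<Rightarrow> nat \<Rightarrow> ('o, 'm) zm \<Rightarrow> bool" where
  "deg C 0 f = iso (lift C) f"
| "deg C (Suc n) f = comp_closure (Z (Zn C n))
      (\<lambda>g. simple_deg (Zn C n) g \<or> parallel_deg (Zn C n) (deg C n) g) f"

definition normalising :: "('o, 'm) cat \<Rightarrow> nat \<Rightarrow> ('o, 'm) zm \<Rightarrow> bool" where
  "normalising C n d \<longleftrightarrow> deg C n d \<and>
     (\<forall>d'. deg C n d' \<and> cCod (Zn C n) d' = cCod (Zn C n) d \<longrightarrow> factors_through (Zn C n) d d')"

definition rel_normalisation ::
  "('o, 'm) cat \<Rightarrow> nat \<Rightarrow> ('o, 'm) zo \<Rightarrow> 'i set \<Rightarrow> ('i \<Rightarrow> ('o, 'm) zm) \<Rightarrow> ('o, 'm) zm \<Rightarrow> bool" where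
  "rel_normalisation C n T I f d \<longleftrightarrow> deg C n d \<and> cCod (Zn C n) d = T \<and>
     (\<forall>i \<in> I. factors_through (Zn C n) (f i) d) \<and>
     (\<forall>d'. deg C n d' \<and> cCod (Zn C n) d' = T \<and> (\<forall>i \<in> I. factors_through (Zn C n) (f i) d')
           \<longrightarrow> factors_through (Zn C n) d d')"

primrec globular_map :: "('o, 'm) cat \<Rightarrow> nat \<Rightarrow> ('o, 'm) zm \<Rightarrow> bool" where
  "globular_map C 0 f = True"
| "globular_map C (Suc n) f \<longleftrightarrow>
     (\<forall>i \<le> zlen (mcod f). iso (Zn C n) (mreg f i)) \<and>
     (\<forall>j < zlen (mdom f). globular_map C n (msing f j))"

primrec globular_obj :: "('o, 'm) cat \<Rightarrow> nat \<Rightarrow> ('o, 'm) zo \<Rightarrow> bool" where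
  "globular_obj C 0 X = True"
| "globular_obj C (Suc n) X \<longleftrightarrow>
     (\<forall>i \<le> zlen X. globular_obj C n (zr X i)) \<and>
     (\<forall>j < zlen X. globular_obj C n (zs X j) \<and> globular_map C n (zx X j) \<and> globular_map C n (zy X j))"

primrec reg_normalising :: "('o, 'm) cat \<Rightarrow> nat \<Rightarrow> ('o, 'm) zm \<Rightarrow> bool" where
  "reg_normalising C 0 f = True"
| "reg_normalising C (Suc n) f \<longleftrightarrow>
     (\<forall>i \<le> zlen (mcod f). normalising C n (mreg f i)) \<and>
     (\<forall>j < zlen (mdom f). reg_normalising C n (msing f j))"

end

theory Submission
  imports Defs
begin

text \<open>At level \<open>n + 1\<close> the minimality of the relative
  normalisation \<open>d : N \<rightarrow> X\<close> is tested against vertical degeneracy maps into \<open>X\<close> assembled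
  slice by slice; a map into \<open>X\<close> factors through such a map as soon as its slices do, because
  degeneracy maps are monic. Replacing one regular slice by an arbitrary degeneracy map shows
  that every regular slice of \<open>d\<close> is normalising. Replacing one singular slice shows that the
  singular slice \<open>d(s\<^sub>j)\<close> is the relative normalisation of \<open>X(s\<^bsub>d\<^sub>s(j)\<^esub>)\<close> with respect to
  the sink formed by the legs of \<open>N\<close> at \<open>j\<close> composed with \<open>d\<close> and the singular slices of the
  \<open>f\<^sub>i\<close> over \<open>d\<^sub>s(j)\<close>. Globularity of \<open>X\<close> makes this sink regularly normalising, so the
  induction hypothesis applies to it and yields globularity of the singular objects and legs of
  \<open>N\<close> and of the singular slices of the \<open>g\<^sub>i\<close>. The regular slices of the \<open>g\<^sub>i\<close> compare two
  normalising maps into the same object and are therefore invertible.\<close>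

section \<open>Monotone maps and their duals\<close>

lemma hat_le: "hat \<phi> i \<le> length \<phi>"
  unfolding hat_def by (rule Min_le) auto

lemma hat_less: "j < hat \<phi> i \<Longrightarrow> \<phi> ! j < i"
proof (rule ccontr)
  assume a: "j < hat \<phi> i" "\<not> \<phi> ! j < i"
  have "j < length \<phi>" using a(1) hat_le[of \<phi> i] by simp
  hence "hat \<phi> i \<le> j" unfolding hat_def using a(2) by (intro Min_le) auto
  thus False using a(1) by simp
qed

lemma hat_ge: "hat \<phi> i < length \<phi> \<Longrightarrow> i \<le> \<phi> ! (hat \<phi> i)"
proof -
  assume a: "hat \<phi> i < length \<phi>"
  have "hat \<phi> i \<in> ({j. j < length \<phi> \<and> \<phi>!j \<ge> i} \<union> {length \<phi>})"
    unfolding hat_def by (rule Min_in) auto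
  thus ?thesis using a by auto
qed

lemma hat_eqI:
  assumes "p \<le> length \<phi>" "\<And>j. j < p \<Longrightarrow> \<phi>!j < i" "p < length \<phi> \<Longrightarrow> i \<le> \<phi>!p"
  shows "hat \<phi> i = p"
proof -
  have "p \<in> ({j. j < length \<phi> \<and> \<phi>!j \<ge> i} \<union> {length \<phi>})"
    using assms by (cases "p < length \<phi>") auto
  moreover have "\<forall>q \<in> ({j. j < length \<phi> \<and> \<phi>!j \<ge> i} \<union> {length \<phi>}). p \<le> q"
    using assms(1,2) by (auto simp: not_less[symmetric])
  ultimately show ?thesis unfolding hat_def
    by (intro antisym Min_le) (auto intro: Min_in)
qed

lemma hat_upt: "i \<le> n \<Longrightarrow> hat [0..<n] i = i"
  by (rule hat_eqI) auto

lemma hat_mono_le: "\<lbrakk>k < length \<phi>; i \<le> \<phi>!k\<rbrakk> \<Longrightarrow> hat \<phi> i \<le> k"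
  using hat_less[of k \<phi> i] by (meson not_le)

lemma hat_top: "\<forall>j < length \<phi>. \<phi>!j < m \<Longrightarrow> hat \<phi> m = length \<phi>"
  by (rule hat_eqI) auto

lemma hat_strict_at:
  assumes "sorted_wrt (<) \<phi>" "j < length \<phi>"
  shows "hat \<phi> (\<phi>!j) = j" "hat \<phi> (Suc (\<phi>!j)) = Suc j"
proof -
  show "hat \<phi> (\<phi>!j) = j"
    by (rule hat_eqI) (use assms in \<open>auto simp: sorted_wrt_iff_nth_less\<close>)
  show "hat \<phi> (Suc (\<phi>!j)) = Suc j"
  proof (rule hat_eqI)
    show "Suc j \<le> length \<phi>" using assms by simp
    fix j' assume "j' < Suc j" thus "\<phi>!j' < Suc (\<phi>!j)" using assms
      by (cases "j' = j") (auto simp: sorted_wrt_iff_nth_less less_Suc_eq)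
  next
    assume "Suc j < length \<phi>" thus "Suc (\<phi>!j) \<le> \<phi>!Suc j" using assms
      by (simp add: sorted_wrt_iff_nth_less Suc_leI)
  qed
qed

lemma hat_not_in:
  assumes "i \<notin> set \<phi>"
  shows "hat \<phi> (Suc i) = hat \<phi> i"
proof (rule hat_eqI)
  show "hat \<phi> i \<le> length \<phi>" by (rule hat_le)
  fix j assume "j < hat \<phi> i" thus "\<phi>!j < Suc i" using hat_less by fastforce
next
  assume a: "hat \<phi> i < length \<phi>"
  hence "i \<le> \<phi>!(hat \<phi> i)" by (rule hat_ge)
  moreover have "\<phi>!(hat \<phi> i) \<noteq> i" using a assms by (metis nth_mem)
  ultimately show "Suc i \<le> \<phi>!(hat \<phi> i)" by simp
qed

lemma hat_comp:
  assumes "sorted \<psi>" "\<forall>j < length \<phi>. \<phi>!j < length \<psi>"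
  shows "hat (map (\<lambda>j. \<psi>!(\<phi>!j)) [0..<length \<phi>]) i = hat \<phi> (hat \<psi> i)"
proof (rule hat_eqI)
  show "hat \<phi> (hat \<psi> i) \<le> length (map (\<lambda>j. \<psi>!(\<phi>!j)) [0..<length \<phi>])" using hat_le by simp
  fix j assume a: "j < hat \<phi> (hat \<psi> i)"
  hence "\<phi>!j < hat \<psi> i" by (rule hat_less)
  hence "\<psi>!(\<phi>!j) < i" by (rule hat_less)
  moreover have "j < length \<phi>" using a hat_le[of \<phi>] by (meson less_le_trans)
  ultimately show "map (\<lambda>j. \<psi>!(\<phi>!j)) [0..<length \<phi>] ! j < i" by simp
next
  let ?p = "hat \<phi> (hat \<psi> i)"
  assume "?p < length (map (\<lambda>j. \<psi>!(\<phi>!j)) [0..<length \<phi>])"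
  hence p: "?p < length \<phi>" by simp
  hence k: "hat \<psi> i \<le> \<phi>!?p" by (rule hat_ge)
  have lt: "\<phi>!?p < length \<psi>" using assms p by auto
  hence "hat \<psi> i < length \<psi>" using k by simp
  hence "i \<le> \<psi>!(hat \<psi> i)" by (rule hat_ge)
  also have "\<dots> \<le> \<psi>!(\<phi>!?p)" using assms(1) k lt by (simp add: sorted_nth_mono)
  finally show "i \<le> map (\<lambda>j. \<psi>!(\<phi>!j)) [0..<length \<phi>] ! ?p" using p by simp
qed

lemma hat_surj:
  assumes "sorted_wrt (<) \<phi>" "\<forall>j < length \<phi>. \<phi>!j < m" "q \<le> length \<phi>"
  shows "\<exists>i \<le> m. hat \<phi> i = q"
proof (cases "q < length \<phi>")
  case True thus ?thesis using assms hat_strict_at(1)[of \<phi> q] by (intro exI[of _ "\<phi>!q"]) auto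
next
  case False thus ?thesis using assms hat_top[of \<phi> m] by (intro exI[of _ m]) auto
qed

lemma hat_fiber_first:
  assumes "sorted \<psi>" "k < length \<psi>" "\<psi>!k = i"
  shows "hat \<psi> i \<le> k" "\<psi>!(hat \<psi> i) = i" "hat \<psi> i = 0 \<or> \<psi>!(hat \<psi> i - 1) < \<psi>!(hat \<psi> i)"
proof -
  show k0: "hat \<psi> i \<le> k" using assms by (intro hat_mono_le) auto
  hence l: "hat \<psi> i < length \<psi>" using assms by simp
  have "i \<le> \<psi>!(hat \<psi> i)" using l by (rule hat_ge)
  moreover have "\<psi>!(hat \<psi> i) \<le> \<psi>!k" using sorted_nth_mono[OF assms(1) k0 assms(2)] .
  ultimately show e: "\<psi>!(hat \<psi> i) = i" using assms by simp
  show "hat \<psi> i = 0 \<or> \<psi>!(hat \<psi> i - 1) < \<psi>!(hat \<psi> i)"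
    using hat_less[of "hat \<psi> i - 1" \<psi> i] e by (cases "hat \<psi> i") auto
qed

lemma hat_fiber_last:
  assumes s: "sorted \<psi>" and k: "k < length \<psi>" and e: "\<psi>!k = i"
  shows "k < hat \<psi> (Suc i)" "hat \<psi> (Suc i) \<le> length \<psi>" "\<psi>!(hat \<psi> (Suc i) - 1) = i"
    "hat \<psi> (Suc i) = length \<psi> \<or> \<psi>!(hat \<psi> (Suc i) - 1) < \<psi>!(hat \<psi> (Suc i))"
proof -
  let ?K = "hat \<psi> (Suc i)"
  show kK: "k < ?K"
  proof (rule ccontr)
    assume "\<not> k < ?K" hence a: "?K \<le> k" by simp
    hence "?K < length \<psi>" using k by simp
    hence "Suc i \<le> \<psi>!?K" by (rule hat_ge)
    moreover have "\<psi>!?K \<le> \<psi>!k" using s a k by (simp add: sorted_nth_mono)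
    ultimately show False using e by simp
  qed
  show Kl: "?K \<le> length \<psi>" by (rule hat_le)
  have "\<psi>!(?K - 1) < Suc i" using kK by (intro hat_less) simp
  moreover have "\<psi>!k \<le> \<psi>!(?K - 1)" using s kK Kl by (intro sorted_nth_mono) auto
  ultimately show e2: "\<psi>!(?K - 1) = i" using e by simp
  show "?K = length \<psi> \<or> \<psi>!(?K - 1) < \<psi>!?K"
  proof (cases "?K < length \<psi>")
    case True thus ?thesis using hat_ge[OF True] e2 by simp
  qed (use Kl in simp)
qed

lemma hat_at_fiber_start:
  assumes "sorted \<phi>" "p < length \<phi>" "p = 0 \<or> \<phi>!(p-1) < \<phi>!p"
  shows "hat \<phi> (\<phi>!p) = p"
proof (rule hat_eqI)
  fix j assume j: "j < p"
  hence "\<phi>!j \<le> \<phi>!(p-1)" using assms(1,2) by (intro sorted_nth_mono) auto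
  thus "\<phi>!j < \<phi>!p" using assms(3) j by auto
qed (use assms in auto)

lemma hat_Suc_at_fiber_end:
  assumes "sorted \<phi>" "p < length \<phi>" "Suc p = length \<phi> \<or> \<phi>!p < \<phi>!Suc p"
  shows "hat \<phi> (Suc (\<phi>!p)) = Suc p"
proof (rule hat_eqI)
  fix j assume j: "j < Suc p"
  hence "\<phi>!j \<le> \<phi>!p" using assms(1,2) by (intro sorted_nth_mono) auto
  thus "\<phi>!j < Suc (\<phi>!p)" by simp
qed (use assms in auto)

lemma sorted_nth_less_imp_less: "sorted \<phi> \<Longrightarrow> i < length \<phi> \<Longrightarrow> \<phi>!i < \<phi>!j \<Longrightarrow> i < j"
  using sorted_nth_mono[of \<phi> j i] by (metis leI not_le)

lemma sorted_nth_between: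
  assumes "sorted \<psi>" "a \<le> k" "k \<le> b" "b < length \<psi>" "\<psi>!a = i" "\<psi>!b = i"
  shows "\<psi>!k = i"
proof -
  have "\<psi>!a \<le> \<psi>!k" using sorted_nth_mono[OF assms(1,2)] assms(3,4) by simp
  moreover have "\<psi>!k \<le> \<psi>!b" using sorted_nth_mono[OF assms(1,3,4)] .
  ultimately show ?thesis using assms(5,6) by simp
qed

lemma sorted_nth_const_step:
  assumes "sorted \<psi>" "b < length \<psi>" "\<psi>!a = \<psi>!b"
  shows "\<forall>k. a \<le> k \<and> k < b \<longrightarrow> \<psi>!k = \<psi>!Suc k"
proof (intro allI impI)
  fix k assume k: "a \<le> k \<and> k < b"
  have "\<psi>!k = \<psi>!b" using sorted_nth_between[OF assms(1), of a k b "\<psi>!b"] k assms by simp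
  moreover have "\<psi>!Suc k = \<psi>!b"
    using sorted_nth_between[OF assms(1), of a "Suc k" b "\<psi>!b"] k assms by simp
  ultimately show "\<psi>!k = \<psi>!Suc k" by simp
qed

lemma sorted_fiber_Min_Max:
  assumes s: "sorted \<phi>" and P: "P = {j. j < length \<phi> \<and> \<phi>!j = i}" and ne: "P \<noteq> {}"
  shows "Min P \<in> P" "Max P \<in> P" "Min P = 0 \<or> \<phi>!(Min P - 1) < \<phi>!(Min P)"
    "Suc (Max P) = length \<phi> \<or> \<phi>!(Max P) < \<phi>!Suc (Max P)"
    "\<And>j. Min P \<le> j \<Longrightarrow> j < Max P \<Longrightarrow> \<phi>!j = i \<and> \<phi>!Suc j = i \<and> Suc j < length \<phi>"
proof -
  have fin: "finite P" using P by auto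
  show mi: "Min P \<in> P" and ma: "Max P \<in> P" using fin ne by auto
  show "Min P = 0 \<or> \<phi>!(Min P - 1) < \<phi>!(Min P)"
  proof (cases "Min P = 0")
    case False
    have "Min P - 1 \<notin> P" using fin False by (metis Min_le diff_less less_numeral_extra(1) not_le not_gr_zero)
    moreover have "\<phi>!(Min P - 1) \<le> \<phi>!(Min P)" using s mi P sorted_nth_mono[of \<phi> "Min P - 1" "Min P"] by auto
    ultimately show ?thesis using mi P by auto
  qed simp
  show "Suc (Max P) = length \<phi> \<or> \<phi>!(Max P) < \<phi>!Suc (Max P)"
  proof (cases "Suc (Max P) = length \<phi>")
    case False
    hence l: "Suc (Max P) < length \<phi>" using ma P by auto
    have "Suc (Max P) \<notin> P" using fin by (metis Max_ge Suc_n_not_le_n)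
    moreover have "\<phi>!(Max P) \<le> \<phi>!Suc (Max P)" using s l by (auto intro: sorted_nth_mono)
    ultimately show ?thesis using ma P l by auto
  qed simp
  fix j assume a: "Min P \<le> j" "j < Max P"
  have l: "Suc j < length \<phi>" and mx: "Max P < length \<phi>" using a ma P by auto
  have "\<phi>!(Min P) = i" "\<phi>!(Max P) = i" using mi ma P by auto
  thus "\<phi>!j = i \<and> \<phi>!Suc j = i \<and> Suc j < length \<phi>"
    using a l mx sorted_nth_between[OF s, of "Min P" j "Max P" i]
      sorted_nth_between[OF s, of "Min P" "Suc j" "Max P" i] by auto
qed

lemma sorted_fiber_Min:
  assumes s: "sorted \<phi>" and j: "j < length \<phi>" and c: "j = 0 \<or> \<phi>!(j-1) < \<phi>!j"
  shows "Min {j'. j' < length \<phi> \<and> \<phi>!j' = \<phi>!j} = j"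
proof (rule Min_eqI)
  fix y assume "y \<in> {j'. j' < length \<phi> \<and> \<phi>!j' = \<phi>!j}"
  hence y: "y < length \<phi>" "\<phi>!y = \<phi>!j" by auto
  show "j \<le> y"
  proof (rule ccontr)
    assume "\<not> j \<le> y"
    hence "y \<le> j - 1" "j \<noteq> 0" by auto
    hence "\<phi>!y \<le> \<phi>!(j-1)" using s j sorted_nth_mono[of \<phi> y "j-1"] by auto
    thus False using c y \<open>j \<noteq> 0\<close> by auto
  qed
qed (use j in auto)

lemma sorted_fiber_Max:
  assumes s: "sorted \<phi>" and j: "j < length \<phi>" and c: "Suc j = length \<phi> \<or> \<phi>!j < \<phi>!Suc j"
  shows "Max {j'. j' < length \<phi> \<and> \<phi>!j' = \<phi>!j} = j"
proof (rule Max_eqI)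
  fix y assume y: "y \<in> {j'. j' < length \<phi> \<and> \<phi>!j' = \<phi>!j}"
  show "y \<le> j"
  proof (rule ccontr)
    assume "\<not> y \<le> j" hence "Suc j \<le> y" by simp
    moreover have l: "Suc j < length \<phi>" using y \<open>Suc j \<le> y\<close> by auto
    ultimately have "\<phi>!Suc j \<le> \<phi>!y" using s y sorted_nth_mono[of \<phi> "Suc j" y] by auto
    thus False using c y l by auto
  qed
qed (use j in auto)

lemma sorted_wrt_less_inj:
  "sorted_wrt (<) (\<phi> :: nat list) \<Longrightarrow> x < length \<phi> \<Longrightarrow> y < length \<phi> \<Longrightarrow> \<phi>!x = \<phi>!y \<Longrightarrow> x = y"
proof (rule ccontr)
  assume "sorted_wrt (<) \<phi>" "x < length \<phi>" "y < length \<phi>" "\<phi>!x = \<phi>!y" "x \<noteq> y"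
  thus False using sorted_wrt_nth_less[of "(<)" \<phi> x y] sorted_wrt_nth_less[of "(<)" \<phi> y x]
    by (cases "x < y") auto
qed

section \<open>Categories\<close>

definition arr :: "('o, 'm) cat \<Rightarrow> 'm \<Rightarrow> 'o \<Rightarrow> 'o \<Rightarrow> bool" where
  "arr D f a b \<longleftrightarrow> f \<in> cArr D \<and> cDom D f = a \<and> cCod D f = b"

lemma cat_arr_obj: "is_category D \<Longrightarrow> arr D f a b \<Longrightarrow> a \<in> cObj D \<and> b \<in> cObj D"
  unfolding is_category_def arr_def by auto

lemma cat_comp: "is_category D \<Longrightarrow> arr D f a b \<Longrightarrow> arr D g b c \<Longrightarrow> arr D (cComp D g f) a c"
  unfolding is_category_def arr_def by auto

lemma cat_assoc: "is_category D \<Longrightarrow> arr D f a b \<Longrightarrow> arr D g b c \<Longrightarrow> arr D h c e \<Longrightarrow>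
   cComp D h (cComp D g f) = cComp D (cComp D h g) f"
  unfolding is_category_def arr_def by metis

lemma cat_assoc':
  "is_category D \<Longrightarrow> arr D f a b \<Longrightarrow> arr D g b' c \<Longrightarrow> arr D h c' e \<Longrightarrow> b = b' \<Longrightarrow> c = c' \<Longrightarrow>
   cComp D h (cComp D g f) = cComp D (cComp D h g) f"
  using cat_assoc by metis

lemma cat_id: "is_category D \<Longrightarrow> a \<in> cObj D \<Longrightarrow> arr D (cId D a) a a"
  unfolding is_category_def arr_def by auto

lemma cat_idl: "is_category D \<Longrightarrow> arr D f a b \<Longrightarrow> cComp D (cId D b) f = f"
  unfolding is_category_def arr_def by auto

lemma cat_idr: "is_category D \<Longrightarrow> arr D f a b \<Longrightarrow> cComp D f (cId D a) = f"
  unfolding is_category_def arr_def by auto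

definition monic :: "('o, 'm) cat \<Rightarrow> 'm \<Rightarrow> bool" where
  "monic D e \<longleftrightarrow> e \<in> cArr D \<and> (\<forall>a b. a \<in> cArr D \<longrightarrow> b \<in> cArr D \<longrightarrow> cCod D a = cDom D e \<longrightarrow>
     cCod D b = cDom D e \<longrightarrow> cDom D a = cDom D b \<longrightarrow> cComp D e a = cComp D e b \<longrightarrow> a = b)"

lemma monic_cancel:
  assumes "monic D e" "arr D a x y" "arr D b x y" "cDom D e = y" "cComp D e a = cComp D e b"
  shows "a = b"
  using assms unfolding monic_def arr_def by metis

lemma iso_arr: "iso D f \<Longrightarrow> f \<in> cArr D"
  unfolding iso_def by simp

lemma iso_id: "is_category D \<Longrightarrow> a \<in> cObj D \<Longrightarrow> iso D (cId D a)"
  unfolding iso_def using cat_id[of D a] cat_idl[of D "cId D a" a a] unfolding arr_def by auto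

lemma iso_invE:
  assumes "iso D f"
  obtains g where "arr D g (cCod D f) (cDom D f)" "cComp D g f = cId D (cDom D f)"
    "cComp D f g = cId D (cCod D f)"
  using assms unfolding iso_def arr_def by blast

lemma iso_inverse_iso:
  assumes "arr D g (cCod D f) (cDom D f)" "cComp D g f = cId D (cDom D f)"
    "cComp D f g = cId D (cCod D f)" "iso D f"
  shows "iso D g"
  using assms unfolding iso_def arr_def by auto

lemma iso_comp:
  assumes cat: "is_category D" and f: "iso D f" and g: "iso D g" and fg: "cDom D g = cCod D f"
  shows "iso D (cComp D g f)"
proof -
  obtain f' where f': "arr D f' (cCod D f) (cDom D f)" "cComp D f' f = cId D (cDom D f)"
    "cComp D f f' = cId D (cCod D f)"
    using f by (rule iso_invE)
  obtain g' where g': "arr D g' (cCod D g) (cDom D g)" "cComp D g' g = cId D (cDom D g)"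
    "cComp D g g' = cId D (cCod D g)"
    using g by (rule iso_invE)
  have af: "arr D f (cDom D f) (cCod D f)" and ag: "arr D g (cCod D f) (cCod D g)"
    using iso_arr[OF f] iso_arr[OF g] fg by (auto simp: arr_def)
  have agf: "arr D (cComp D g f) (cDom D f) (cCod D g)" by (rule cat_comp[OF cat af ag])
  have G': "arr D g' (cCod D g) (cCod D f)" using g'(1) fg by simp
  have af'g': "arr D (cComp D f' g') (cCod D g) (cDom D f)" using cat_comp[OF cat G' f'(1)] .
  have "cComp D (cComp D f' g') (cComp D g f) = cComp D f' (cComp D g' (cComp D g f))"
    using cat_assoc[OF cat agf G' f'(1)] by simp
  also have "cComp D g' (cComp D g f) = cComp D (cComp D g' g) f" using cat_assoc[OF cat af ag G'] .
  also have "\<dots> = f" using g'(2) fg cat_idl[OF cat af] by simp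
  finally have left: "cComp D (cComp D f' g') (cComp D g f) = cId D (cDom D f)" using f'(2) by simp
  have "cComp D (cComp D g f) (cComp D f' g') = cComp D g (cComp D f (cComp D f' g'))"
    using cat_assoc[OF cat af'g' af ag] by simp
  also have "cComp D f (cComp D f' g') = cComp D (cComp D f f') g'" using cat_assoc[OF cat G' f'(1) af] .
  also have "\<dots> = g'" using f'(3) cat_idl[OF cat G'] by simp
  finally have right: "cComp D (cComp D g f) (cComp D f' g') = cId D (cCod D g)" using g'(3) by simp
  show ?thesis unfolding iso_def using agf af'g' left right unfolding arr_def by auto
qed

lemma iso_monic:
  assumes cat: "is_category D" and f: "iso D f"
  shows "monic D f"
proof -
  obtain f' where f': "arr D f' (cCod D f) (cDom D f)" "cComp D f' f = cId D (cDom D f)"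
    using f by (rule iso_invE)
  have af: "arr D f (cDom D f) (cCod D f)" using iso_arr[OF f] by (simp add: arr_def)
  show ?thesis unfolding monic_def
  proof (intro conjI allI impI)
    show "f \<in> cArr D" using iso_arr[OF f] .
    fix a b assume a: "a \<in> cArr D" and b: "b \<in> cArr D" and ca: "cCod D a = cDom D f"
      and cb: "cCod D b = cDom D f" and ab: "cDom D a = cDom D b" and e: "cComp D f a = cComp D f b"
    have aa: "arr D a (cDom D a) (cDom D f)" and bb: "arr D b (cDom D a) (cDom D f)"
      using a b ca cb ab by (auto simp: arr_def)
    have "a = cComp D (cComp D f' f) a" using f'(2) cat_idl[OF cat aa] by simp
    also have "\<dots> = cComp D f' (cComp D f a)" using cat_assoc[OF cat aa af f'(1)] by simp
    also have "\<dots> = cComp D f' (cComp D f b)" using e by simp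
    also have "\<dots> = cComp D (cComp D f' f) b" using cat_assoc[OF cat bb af f'(1)] by simp
    also have "\<dots> = b" using f'(2) cat_idl[OF cat bb] by simp
    finally show "a = b" .
  qed
qed

section \<open>The category of zigzags\<close>

lemma zlen_ZZ[simp]: "zlen (ZZ rs ss xs ys) = length ss" by (simp add: zlen_def)
lemma zr_ZZ[simp]: "zr (ZZ rs ss xs ys) i = rs ! i" by (simp add: zr_def)
lemma zs_ZZ[simp]: "zs (ZZ rs ss xs ys) i = ss ! i" by (simp add: zs_def)
lemma zx_ZZ[simp]: "zx (ZZ rs ss xs ys) i = xs ! i" by (simp add: zx_def)
lemma zy_ZZ[simp]: "zy (ZZ rs ss xs ys) i = ys ! i" by (simp add: zy_def)
lemma mdom_ZM[simp]: "mdom (ZM X Y fs fr fsg) = X" by (simp add: mdom_def)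
lemma mcod_ZM[simp]: "mcod (ZM X Y fs fr fsg) = Y" by (simp add: mcod_def)
lemma msing_map_ZM[simp]: "msing_map (ZM X Y fs fr fsg) = fs" by (simp add: msing_map_def)
lemma mreg_ZM[simp]: "mreg (ZM X Y fs fr fsg) i = fr ! i" by (simp add: mreg_def)
lemma msing_ZM[simp]: "msing (ZM X Y fs fr fsg) i = fsg ! i" by (simp add: msing_def)

lemma Z_simps[simp]: "cObj (Z D) = {X. zig_obj D X}" "cArr (Z D) = {f. zig_map D f}"
  "cDom (Z D) = mdom" "cCod (Z D) = mcod" "cComp (Z D) = zig_comp D" "cId (Z D) = zig_id D"
  by (simp_all add: Z_def)

lemma zig_obj_arr:
  assumes "zig_obj D X"
  shows "\<And>i. i \<le> zlen X \<Longrightarrow> zr X i \<in> cObj D"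
    and "\<And>j. j < zlen X \<Longrightarrow> zs X j \<in> cObj D"
    and "\<And>j. j < zlen X \<Longrightarrow> arr D (zx X j) (zr X j) (zs X j)"
    and "\<And>j. j < zlen X \<Longrightarrow> arr D (zy X j) (zr X (Suc j)) (zs X j)"
  using assms unfolding zig_obj_def arr_def by (auto simp: less_Suc_eq_le[symmetric])

definition zm_typed ::
  "(('o, 'm) zo, ('o, 'm) zm) cat \<Rightarrow> ('o, 'm) zo \<Rightarrow> ('o, 'm) zo \<Rightarrow> nat list \<Rightarrow>
   ('o, 'm) zm list \<Rightarrow> ('o, 'm) zm list \<Rightarrow> bool" where
  "zm_typed D X Y fs fr fsg \<longleftrightarrow> zig_obj D X \<and> zig_obj D Y \<and> delta_map fs (zlen X) (zlen Y) \<and>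
     length fr = Suc (zlen Y) \<and> length fsg = zlen X \<and>
     (\<forall>i \<le> zlen Y. arr D (fr!i) (zr X (hat fs i)) (zr Y i)) \<and>
     (\<forall>j < zlen X. arr D (fsg!j) (zs X j) (zs Y (fs!j)))"

text \<open>The squares of \<open>zig_map\<close>, indexed by the singular heights of the source instead of
  by the fibres of \<open>f\<^sub>s\<close>.\<close>

definition zm_commutes ::
  "(('o, 'm) zo, ('o, 'm) zm) cat \<Rightarrow> ('o, 'm) zo \<Rightarrow> ('o, 'm) zo \<Rightarrow> nat list \<Rightarrow>
   ('o, 'm) zm list \<Rightarrow> ('o, 'm) zm list \<Rightarrow> bool" where
  "zm_commutes D X Y \<phi> fr fsg \<longleftrightarrow>
    (\<forall>j < zlen X. (j = 0 \<or> \<phi>!(j-1) < \<phi>!j) \<longrightarrow>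
        cComp D (fsg!j) (zx X j) = cComp D (zx Y (\<phi>!j)) (fr!(\<phi>!j))) \<and>
    (\<forall>j < zlen X. (Suc j = zlen X \<or> \<phi>!j < \<phi>!Suc j) \<longrightarrow>
        cComp D (fsg!j) (zy X j) = cComp D (zy Y (\<phi>!j)) (fr!Suc (\<phi>!j))) \<and>
    (\<forall>j. Suc j < zlen X \<and> \<phi>!j = \<phi>!Suc j \<longrightarrow>
        cComp D (fsg!j) (zy X j) = cComp D (fsg!Suc j) (zx X (Suc j))) \<and>
    (\<forall>i < zlen Y. i \<notin> set \<phi> \<longrightarrow> cComp D (zx Y i) (fr!i) = cComp D (zy Y i) (fr!Suc i))"

lemma zm_commutesD:
  assumes "zm_commutes D X Y \<phi> fr fsg"
  shows "\<And>j. j < zlen X \<Longrightarrow> j = 0 \<or> \<phi>!(j-1) < \<phi>!j \<Longrightarrow>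
      cComp D (fsg!j) (zx X j) = cComp D (zx Y (\<phi>!j)) (fr!(\<phi>!j))"
    "\<And>j. j < zlen X \<Longrightarrow> Suc j = zlen X \<or> \<phi>!j < \<phi>!Suc j \<Longrightarrow>
      cComp D (fsg!j) (zy X j) = cComp D (zy Y (\<phi>!j)) (fr!Suc (\<phi>!j))"
    "\<And>j. Suc j < zlen X \<Longrightarrow> \<phi>!j = \<phi>!Suc j \<Longrightarrow>
      cComp D (fsg!j) (zy X j) = cComp D (fsg!Suc j) (zx X (Suc j))"
    "\<And>i. i < zlen Y \<Longrightarrow> i \<notin> set \<phi> \<Longrightarrow> cComp D (zx Y i) (fr!i) = cComp D (zy Y i) (fr!Suc i)"
  using assms unfolding zm_commutes_def by auto

definition fibre_squares ::
  "(('o, 'm) zo, ('o, 'm) zm) cat \<Rightarrow> ('o, 'm) zo \<Rightarrow> ('o, 'm) zo \<Rightarrow> nat list \<Rightarrow>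
   ('o, 'm) zm list \<Rightarrow> ('o, 'm) zm list \<Rightarrow> bool" where
  "fibre_squares D X Y fs fr fsg \<longleftrightarrow> (\<forall>i < zlen Y.
     (let P = {j. j < zlen X \<and> fs ! j = i} in
      if P \<noteq> {} then
        (cComp D (fsg ! Min P) (zx X (Min P)) = cComp D (zx Y i) (fr ! i) \<and>
         cComp D (fsg ! Max P) (zy X (Max P)) = cComp D (zy Y i) (fr ! Suc i) \<and>
         (\<forall>j. Min P \<le> j \<and> j < Max P \<longrightarrow>
             cComp D (fsg ! j) (zy X j) = cComp D (fsg ! Suc j) (zx X (Suc j))))
      else cComp D (zx Y i) (fr ! i) = cComp D (zy Y i) (fr ! Suc i)))"

lemma zm_commutes_if_fibre_squares:
  assumes s: "sorted fs" and len: "length fs = zlen X" and lt: "\<forall>j<zlen X. fs!j < zlen Y"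
    and R: "fibre_squares D X Y fs fr fsg"
  shows "zm_commutes D X Y fs fr fsg"
proof -
  note R' = R[unfolded fibre_squares_def, rule_format]
  show ?thesis unfolding zm_commutes_def
  proof (intro conjI allI impI)
    fix j assume j: "j < zlen X" and c: "j = 0 \<or> fs!(j-1) < fs!j"
    let ?P = "{j'. j' < zlen X \<and> fs ! j' = fs!j}"
    have "?P \<noteq> {}" "Min ?P = j" using sorted_fiber_Min[OF s, of j] j c len by auto
    thus "cComp D (fsg!j) (zx X j) = cComp D (zx Y (fs!j)) (fr!(fs!j))"
      using R'[of "fs!j"] lt j by (auto simp: Let_def)
  next
    fix j assume j: "j < zlen X" and c: "Suc j = zlen X \<or> fs!j < fs!Suc j"
    let ?P = "{j'. j' < zlen X \<and> fs ! j' = fs!j}"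
    have "?P \<noteq> {}" "Max ?P = j" using sorted_fiber_Max[OF s, of j] j c len by auto
    thus "cComp D (fsg!j) (zy X j) = cComp D (zy Y (fs!j)) (fr!Suc (fs!j))"
      using R'[of "fs!j"] lt j by (auto simp: Let_def)
  next
    fix j assume c: "Suc j < zlen X \<and> fs!j = fs!Suc j"
    let ?P = "{j'. j' < zlen X \<and> fs ! j' = fs!j}"
    have ne: "?P \<noteq> {}" using c by auto
    have "Min ?P \<le> j" "Suc j \<le> Max ?P" using c by (auto intro: Min_le Max_ge)
    moreover have "fs!j < zlen Y" using lt c by auto
    note H = R'[OF this, unfolded Let_def if_P[OF ne]]
    ultimately show "cComp D (fsg!j) (zy X j) = cComp D (fsg!Suc j) (zx X (Suc j))"
      using H[THEN conjunct2, THEN conjunct2, rule_format, of j] by simp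
  next
    fix i assume i: "i < zlen Y" "i \<notin> set fs"
    have "{j. j < zlen X \<and> fs ! j = i} = {}" using i len by (auto simp: in_set_conv_nth)
    thus "cComp D (zx Y i) (fr!i) = cComp D (zy Y i) (fr!Suc i)"
      using R i unfolding fibre_squares_def by (auto simp: Let_def)
  qed
qed

lemma fibre_squares_if_zm_commutes:
  assumes s: "sorted fs" and len: "length fs = zlen X"
    and L: "zm_commutes D X Y fs fr fsg"
  shows "fibre_squares D X Y fs fr fsg"
  unfolding fibre_squares_def Let_def
proof (intro allI impI)
  fix i assume i: "i < zlen Y"
  define P where "P = {j. j < zlen X \<and> fs ! j = i}"
  have P': "P = {j. j < length fs \<and> fs ! j = i}" using P_def len by simp
  show "if P \<noteq> {} then
          (cComp D (fsg ! Min P) (zx X (Min P)) = cComp D (zx Y i) (fr ! i) \<and>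
           cComp D (fsg ! Max P) (zy X (Max P)) = cComp D (zy Y i) (fr ! Suc i) \<and>
           (\<forall>j. Min P \<le> j \<and> j < Max P \<longrightarrow>
               cComp D (fsg ! j) (zy X j) = cComp D (fsg ! Suc j) (zx X (Suc j))))
        else cComp D (zx Y i) (fr ! i) = cComp D (zy Y i) (fr ! Suc i)"
  proof (cases "P = {}")
    case True
    hence "i \<notin> set fs" using P_def len by (auto simp: in_set_conv_nth)
    thus ?thesis using L i True unfolding zm_commutes_def by simp
  next
    case False
    note ff = sorted_fiber_Min_Max[OF s P' False]
    have "cComp D (fsg ! Min P) (zx X (Min P)) = cComp D (zx Y i) (fr ! i)"
      using L ff(1,3) len P' unfolding zm_commutes_def by auto
    moreover have "cComp D (fsg ! Max P) (zy X (Max P)) = cComp D (zy Y i) (fr ! Suc i)"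
      using L ff(2,4) len P' unfolding zm_commutes_def by auto
    moreover have "\<forall>j. Min P \<le> j \<and> j < Max P \<longrightarrow>
        cComp D (fsg ! j) (zy X j) = cComp D (fsg ! Suc j) (zx X (Suc j))"
      using L ff(5) len unfolding zm_commutes_def by auto
    ultimately show ?thesis using False by simp
  qed
qed

lemma zig_map_iff:
  "zig_map D f \<longleftrightarrow>
     (\<exists>X Y fs fr fsg. f = ZM X Y fs fr fsg \<and> zm_typed D X Y fs fr fsg \<and> zm_commutes D X Y fs fr fsg)"
proof -
  have "zig_map D f \<longleftrightarrow>
     (\<exists>X Y fs fr fsg. f = ZM X Y fs fr fsg \<and> zm_typed D X Y fs fr fsg \<and> fibre_squares D X Y fs fr fsg)"
    unfolding zig_map_def zm_typed_def fibre_squares_def arr_def by blast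
  moreover have "fibre_squares D X Y fs fr fsg \<longleftrightarrow> zm_commutes D X Y fs fr fsg"
    if "zm_typed D X Y fs fr fsg" for X Y fs fr fsg
    using that zm_commutes_if_fibre_squares fibre_squares_if_zm_commutes
    unfolding zm_typed_def delta_map_def by metis
  ultimately show ?thesis by blast
qed

lemma zig_mapE:
  assumes "zig_map D f"
  obtains X Y fs fr fsg
    where "f = ZM X Y fs fr fsg" "zm_typed D X Y fs fr fsg" "zm_commutes D X Y fs fr fsg"
  using assms unfolding zig_map_iff by blast

lemma zig_mapI:
  "zm_typed D X Y fs fr fsg \<Longrightarrow> zm_commutes D X Y fs fr fsg \<Longrightarrow> zig_map D (ZM X Y fs fr fsg)"
  unfolding zig_map_iff by blast

lemma zig_map_acc:
  assumes "zig_map D f"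
  shows "zig_obj D (mdom f)" "zig_obj D (mcod f)"
    "delta_map (msing_map f) (zlen (mdom f)) (zlen (mcod f))"
    "\<And>i. i \<le> zlen (mcod f) \<Longrightarrow>
       arr D (mreg f i) (zr (mdom f) (hat (msing_map f) i)) (zr (mcod f) i)"
    "\<And>j. j < zlen (mdom f) \<Longrightarrow>
       arr D (msing f j) (zs (mdom f) j) (zs (mcod f) (msing_map f ! j))"
  using assms by (auto elim!: zig_mapE simp: zm_typed_def)

lemma zig_map_lengths:
  assumes "zig_map D f"
  shows "length (msing_map f) = zlen (mdom f)" "sorted (msing_map f)"
    "\<And>j. j < zlen (mdom f) \<Longrightarrow> msing_map f ! j < zlen (mcod f)"
  using zig_map_acc(3)[OF assms] unfolding delta_map_def by auto

lemma zig_map_ZM_iff: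
  "zig_map D (ZM X Y fs fr fsg) \<longleftrightarrow> zm_typed D X Y fs fr fsg \<and> zm_commutes D X Y fs fr fsg"
  unfolding zig_map_iff by auto

lemma zig_map_squares:
  assumes "zig_map D f"
  shows "\<And>j. j < zlen (mdom f) \<Longrightarrow> (j = 0 \<or> msing_map f!(j-1) < msing_map f!j) \<Longrightarrow>
      cComp D (msing f j) (zx (mdom f) j) = cComp D (zx (mcod f) (msing_map f!j)) (mreg f (msing_map f!j))"
    "\<And>j. j < zlen (mdom f) \<Longrightarrow> (Suc j = zlen (mdom f) \<or> msing_map f!j < msing_map f!Suc j) \<Longrightarrow>
      cComp D (msing f j) (zy (mdom f) j) =
      cComp D (zy (mcod f) (msing_map f!j)) (mreg f (Suc (msing_map f!j)))"
    "\<And>j. Suc j < zlen (mdom f) \<Longrightarrow> msing_map f!j = msing_map f!Suc j \<Longrightarrow>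
      cComp D (msing f j) (zy (mdom f) j) = cComp D (msing f (Suc j)) (zx (mdom f) (Suc j))"
    "\<And>i. i < zlen (mcod f) \<Longrightarrow> i \<notin> set (msing_map f) \<Longrightarrow>
      cComp D (zx (mcod f) i) (mreg f i) = cComp D (zy (mcod f) i) (mreg f (Suc i))"
  using assms by (auto elim!: zig_mapE simp: zm_commutes_def)

lemma zig_comp_acc:
  "mdom (zig_comp D g f) = mdom f" "mcod (zig_comp D g f) = mcod g"
  "msing_map (zig_comp D g f) = map (\<lambda>j. msing_map g ! (msing_map f ! j)) [0..<length (msing_map f)]"
  "i \<le> zlen (mcod g) \<Longrightarrow>
     mreg (zig_comp D g f) i = cComp D (mreg g i) (mreg f (hat (msing_map g) i))"
  "j < length (msing_map f) \<Longrightarrow>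
     msing (zig_comp D g f) j = cComp D (msing g (msing_map f ! j)) (msing f j)"
  by (simp_all add: zig_comp_def del: upt_Suc add: less_Suc_eq_le[symmetric])

lemma zig_id_acc:
  "mdom (zig_id D X) = X" "mcod (zig_id D X) = X" "msing_map (zig_id D X) = [0..<zlen X]"
  "i \<le> zlen X \<Longrightarrow> mreg (zig_id D X) i = cId D (zr X i)"
  "j < zlen X \<Longrightarrow> msing (zig_id D X) j = cId D (zs X j)"
  by (simp_all add: zig_id_def del: upt_Suc add: less_Suc_eq_le[symmetric])

lemma zig_eqI:
  assumes "zig_map D a" "zig_map D b" "mdom a = mdom b" "mcod a = mcod b"
    "msing_map a = msing_map b"
    "\<And>i. i \<le> zlen (mcod a) \<Longrightarrow> mreg a i = mreg b i"
    "\<And>j. j < zlen (mdom a) \<Longrightarrow> msing a j = msing b j"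
  shows "a = b"
proof -
  obtain X Y fs fr fsg where A: "a = ZM X Y fs fr fsg" "zm_typed D X Y fs fr fsg"
    using assms(1) by (rule zig_mapE)
  obtain X' Y' fs' fr' fsg' where B: "b = ZM X' Y' fs' fr' fsg'" "zm_typed D X' Y' fs' fr' fsg'"
    using assms(2) by (rule zig_mapE)
  show ?thesis
    using assms(3-7) A B unfolding zm_typed_def by (auto intro: nth_equalityI simp: less_Suc_eq_le)
qed

locale zig_composable =
  fixes D :: "(('o, 'm) zo, ('o, 'm) zm) cat" and X Y W :: "('o, 'm) zo"
    and \<phi> \<psi> :: "nat list" and fr fsg gr gsg :: "('o, 'm) zm list"
  assumes cat: "is_category D"
    and f_typed: "zm_typed D X Y \<phi> fr fsg" and f_commutes: "zm_commutes D X Y \<phi> fr fsg"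
    and g_typed: "zm_typed D Y W \<psi> gr gsg" and g_commutes: "zm_commutes D Y W \<psi> gr gsg"
begin

definition "\<chi> = map (\<lambda>j. \<psi>!(\<phi>!j)) [0..<length \<phi>]"
definition "cr = map (\<lambda>i. cComp D (gr!i) (fr!(hat \<psi> i))) [0..<Suc (zlen W)]"
definition "cs = map (\<lambda>j. cComp D (gsg!(\<phi>!j)) (fsg!j)) [0..<length \<phi>]"

lemma objs: "zig_obj D X" "zig_obj D Y" "zig_obj D W"
  using f_typed g_typed unfolding zm_typed_def by auto

lemma \<phi>: "length \<phi> = zlen X" "sorted \<phi>" "\<And>j. j < zlen X \<Longrightarrow> \<phi>!j < zlen Y"
  using f_typed unfolding zm_typed_def delta_map_def by auto

lemma \<psi>: "length \<psi> = zlen Y" "sorted \<psi>" "\<And>k. k < zlen Y \<Longrightarrow> \<psi>!k < zlen W"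
  using g_typed unfolding zm_typed_def delta_map_def by auto

lemma arrs:
  "\<And>k. k \<le> zlen Y \<Longrightarrow> arr D (fr!k) (zr X (hat \<phi> k)) (zr Y k)"
  "\<And>j. j < zlen X \<Longrightarrow> arr D (fsg!j) (zs X j) (zs Y (\<phi>!j))"
  "\<And>i. i \<le> zlen W \<Longrightarrow> arr D (gr!i) (zr Y (hat \<psi> i)) (zr W i)"
  "\<And>k. k < zlen Y \<Longrightarrow> arr D (gsg!k) (zs Y k) (zs W (\<psi>!k))"
  using f_typed g_typed unfolding zm_typed_def by auto

lemmas f_squares = zm_commutesD[OF f_commutes]
lemmas g_squares = zm_commutesD[OF g_commutes]

lemma legs:
  "\<And>j. j < zlen X \<Longrightarrow> arr D (zx X j) (zr X j) (zs X j)"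
  "\<And>j. j < zlen X \<Longrightarrow> arr D (zy X j) (zr X (Suc j)) (zs X j)"
  "\<And>j. j < zlen Y \<Longrightarrow> arr D (zx Y j) (zr Y j) (zs Y j)"
  "\<And>j. j < zlen Y \<Longrightarrow> arr D (zy Y j) (zr Y (Suc j)) (zs Y j)"
  "\<And>j. j < zlen W \<Longrightarrow> arr D (zx W j) (zr W j) (zs W j)"
  "\<And>j. j < zlen W \<Longrightarrow> arr D (zy W j) (zr W (Suc j)) (zs W j)"
  using zig_obj_arr(3,4)[OF objs(1)] zig_obj_arr(3,4)[OF objs(2)] zig_obj_arr(3,4)[OF objs(3)]
  by auto

lemma \<chi>_nth: "j < zlen X \<Longrightarrow> \<chi>!j = \<psi>!(\<phi>!j)"
  using \<phi>(1) by (simp add: \<chi>_def)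

lemma cr_nth: "i \<le> zlen W \<Longrightarrow> cr!i = cComp D (gr!i) (fr!(hat \<psi> i))"
  by (simp add: cr_def del: upt_Suc)

lemma cs_nth: "j < zlen X \<Longrightarrow> cs!j = cComp D (gsg!(\<phi>!j)) (fsg!j)"
  using \<phi>(1) by (simp add: cs_def)

lemma \<chi>_mono: "a \<le> b \<Longrightarrow> b < zlen X \<Longrightarrow> \<chi>!a \<le> \<chi>!b"
  using sorted_nth_mono[OF \<phi>(2), of a b] sorted_nth_mono[OF \<psi>(2), of "\<phi>!a" "\<phi>!b"] \<phi> \<psi>(1)
  by (simp add: \<chi>_nth)

lemma comp_typed: "zm_typed D X W \<chi> cr cs"
  unfolding zm_typed_def
proof (intro conjI allI impI)
  show "delta_map \<chi> (zlen X) (zlen W)" unfolding delta_map_def sorted_iff_nth_mono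
    using \<chi>_mono \<chi>_nth \<phi>(1,3) \<psi>(3) by (auto simp: \<chi>_def)
  show "zig_obj D X" "zig_obj D W" by (fact objs(1), fact objs(3))
  show "length cr = Suc (zlen W)" by (simp add: cr_def del: upt_Suc)
  show "length cs = zlen X" by (simp add: cs_def \<phi>(1))
  fix i assume i: "i \<le> zlen W"
  have "hat \<psi> i \<le> zlen Y" using hat_le[of \<psi> i] \<psi>(1) by simp
  moreover have "hat \<chi> i = hat \<phi> (hat \<psi> i)"
    unfolding \<chi>_def by (rule hat_comp[OF \<psi>(2)]) (use \<phi> \<psi>(1) in auto)
  ultimately show "arr D (cr!i) (zr X (hat \<chi> i)) (zr W i)"
    using cr_nth[OF i] cat_comp[OF cat arrs(1) arrs(3)[OF i]] by simp
next
  fix j assume j: "j < zlen X"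
  show "arr D (cs!j) (zs X j) (zs W (\<chi>!j))"
    using cs_nth[OF j] \<chi>_nth[OF j] cat_comp[OF cat arrs(2)[OF j] arrs(4)[OF \<phi>(3)[OF j]]] by simp
qed

text \<open>\<open>E k\<close> and \<open>E' k\<close> are the composites \<open>g \<circ> f\<close> through the two legs of \<open>Y\<close> at singular
  height \<open>k\<close>; each square of the composite is a chain of equalities between them.\<close>

definition "E k = cComp D (gsg!k) (cComp D (zx Y k) (fr!k))"
definition "E' k = cComp D (gsg!k) (cComp D (zy Y k) (fr!Suc k))"

lemma E_eq_E'_outside_image: "k < zlen Y \<Longrightarrow> k \<notin> set \<phi> \<Longrightarrow> E k = E' k"
  unfolding E_def E'_def using f_squares(4) by simp

lemma E'_eq_E_Suc:
  assumes k: "Suc k < zlen Y" "\<psi>!k = \<psi>!Suc k"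
  shows "E' k = E (Suc k)"
proof -
  have "E' k = cComp D (cComp D (gsg!k) (zy Y k)) (fr!Suc k)"
    unfolding E'_def using k by (intro cat_assoc'[OF cat arrs(1) legs(4) arrs(4)]) auto
  also have "\<dots> = cComp D (cComp D (gsg!Suc k) (zx Y (Suc k))) (fr!Suc k)"
    using g_squares(3) k by simp
  also have "\<dots> = E (Suc k)"
    unfolding E_def using k by (intro cat_assoc'[OF cat arrs(1) legs(3) arrs(4), symmetric]) auto
  finally show ?thesis .
qed

lemma E'_eq_E_chain:
  assumes "a < b" "b < zlen Y" "\<forall>k. a \<le> k \<and> k < b \<longrightarrow> \<psi>!k = \<psi>!Suc k"
    "\<forall>k. a < k \<and> k < b \<longrightarrow> k \<notin> set \<phi>"
  shows "E' a = E b"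
  using assms
proof (induction b)
  case (Suc b)
  show ?case
  proof (cases "a = b")
    case True
    thus ?thesis using Suc.prems E'_eq_E_Suc by blast
  next
    case False
    hence "E' a = E b" using Suc.prems by (intro Suc.IH) auto
    also have "\<dots> = E' b" using Suc.prems False by (intro E_eq_E'_outside_image) auto
    also have "\<dots> = E (Suc b)" using Suc.prems by (intro E'_eq_E_Suc) auto
    finally show ?thesis .
  qed
qed simp

lemma comp_square_first:
  assumes j: "j < zlen X" and c: "j = 0 \<or> \<chi>!(j-1) < \<chi>!j"
  shows "cComp D (cs!j) (zx X j) = cComp D (zx W (\<chi>!j)) (cr!(\<chi>!j))"
proof -
  define k where "k = \<phi>!j"
  define i where "i = \<psi>!k"
  have k: "k < zlen Y" using \<phi>(3)[OF j] k_def by simp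
  have i: "i < zlen W" using \<psi>(3)[OF k] i_def by simp
  have \<chi>j: "\<chi>!j = i" using \<chi>_nth[OF j] k_def i_def by simp
  note hf = hat_fiber_first[OF \<psi>(2), of k i, unfolded \<psi>(1), OF k i_def[symmetric]]
  define k0 where "k0 = hat \<psi> i"
  have k0: "k0 \<le> k" "\<psi>!k0 = i" "k0 = 0 \<or> \<psi>!(k0-1) < \<psi>!k0" using hf k0_def by auto
  have first: "j = 0 \<or> \<phi>!(j-1) < \<phi>!j"
  proof (cases j)
    case (Suc j')
    have "\<phi>!j' \<le> \<phi>!j" using \<phi> j Suc by (simp add: sorted_nth_mono)
    moreover have "\<phi>!j' \<noteq> \<phi>!j" using c Suc \<chi>_nth j by auto
    ultimately show ?thesis using Suc by simp
  qed simp
  have gap: "k' \<notin> set \<phi>" if "k0 \<le> k'" "k' < k" for k'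
  proof
    assume "k' \<in> set \<phi>"
    then obtain j' where j': "j' < zlen X" "\<phi>!j' = k'" using \<phi>(1) by (auto simp: in_set_conv_nth)
    have "j' < j" using sorted_nth_less_imp_less[OF \<phi>(2), of j'] j' that \<phi>(1) k_def by simp
    hence "j' \<le> j - 1" "j \<noteq> 0" by auto
    hence "\<chi>!j' \<le> \<chi>!(j-1)" using \<chi>_mono j by simp
    moreover have "\<chi>!j' = \<psi>!k'" using \<chi>_nth j' by simp
    moreover have "\<psi>!k0 \<le> \<psi>!k'" using \<psi> that k by (simp add: sorted_nth_mono)
    ultimately show False using c \<chi>j k0(2) \<open>j \<noteq> 0\<close> by simp
  qed
  have "cComp D (cs!j) (zx X j) = cComp D (gsg!k) (cComp D (fsg!j) (zx X j))"
    unfolding cs_nth[OF j] k_def[symmetric] using j k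
    by (intro cat_assoc'[OF cat legs(1) arrs(2) arrs(4), symmetric]) (auto simp: k_def)
  also have "\<dots> = E k" unfolding E_def using f_squares(1)[OF j first] k_def by simp
  also have "\<dots> = E k0"
  proof (cases "k0 = k")
    case False
    hence lt: "k0 < k" using k0 by simp
    have "E k0 = E' k0" using gap lt k by (intro E_eq_E'_outside_image) auto
    also have "\<dots> = E k"
    proof (rule E'_eq_E_chain[OF lt k])
      show "\<forall>k'. k0 \<le> k' \<and> k' < k \<longrightarrow> \<psi>!k' = \<psi>!Suc k'"
        by (rule sorted_nth_const_step[OF \<psi>(2)]) (use k0 k \<psi>(1) i_def in auto)
      show "\<forall>k'. k0 < k' \<and> k' < k \<longrightarrow> k' \<notin> set \<phi>" using gap by auto
    qed
    finally show ?thesis by simp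
  qed simp
  also have "\<dots> = cComp D (cComp D (gsg!k0) (zx Y k0)) (fr!k0)"
    unfolding E_def using k0 k by (intro cat_assoc'[OF cat arrs(1) legs(3) arrs(4)]) auto
  also have "\<dots> = cComp D (cComp D (zx W i) (gr!i)) (fr!k0)" using g_squares(1)[of k0] k0 k by simp
  also have "\<dots> = cComp D (zx W i) (cComp D (gr!i) (fr!k0))"
    using i k0 k \<psi>(1) hf(1) k0_def
    by (intro cat_assoc'[OF cat arrs(1) arrs(3) legs(5), symmetric]) auto
  also have "\<dots> = cComp D (zx W (\<chi>!j)) (cr!(\<chi>!j))" using \<chi>j cr_nth[of i] i k0_def by simp
  finally show ?thesis .
qed

lemma comp_square_last:
  assumes j: "j < zlen X" and c: "Suc j = zlen X \<or> \<chi>!j < \<chi>!Suc j"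
  shows "cComp D (cs!j) (zy X j) = cComp D (zy W (\<chi>!j)) (cr!Suc (\<chi>!j))"
proof -
  define k where "k = \<phi>!j"
  define i where "i = \<psi>!k"
  have k: "k < zlen Y" using \<phi>(3)[OF j] k_def by simp
  have i: "i < zlen W" using \<psi>(3)[OF k] i_def by simp
  have \<chi>j: "\<chi>!j = i" using \<chi>_nth[OF j] k_def i_def by simp
  note hl = hat_fiber_last[OF \<psi>(2), of k i, unfolded \<psi>(1), OF k i_def[symmetric]]
  define K where "K = hat \<psi> (Suc i)"
  define k1 where "k1 = K - 1"
  have K: "k < K" "K \<le> zlen Y" "\<psi>!k1 = i" using hl K_def k1_def by auto
  have k1: "k \<le> k1" "k1 < zlen Y" "Suc k1 = K" using K k1_def by auto
  have last: "Suc j = zlen X \<or> \<phi>!j < \<phi>!Suc j"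
  proof (cases "Suc j = zlen X")
    case False
    hence l: "Suc j < zlen X" using j by simp
    have "\<phi>!j \<le> \<phi>!Suc j" using \<phi> l by (simp add: sorted_nth_mono)
    moreover have "\<phi>!j \<noteq> \<phi>!Suc j" using c False \<chi>_nth j l by auto
    ultimately show ?thesis by simp
  qed simp
  have gap: "k' \<notin> set \<phi>" if "k < k'" "k' \<le> k1" for k'
  proof
    assume "k' \<in> set \<phi>"
    then obtain j' where j': "j' < zlen X" "\<phi>!j' = k'" using \<phi>(1) by (auto simp: in_set_conv_nth)
    have "j < j'" using sorted_nth_less_imp_less[OF \<phi>(2), of j j'] j' that \<phi>(1) k_def j by simp
    hence sj: "Suc j < zlen X" "Suc j \<le> j'" using j' by auto
    hence "\<chi>!Suc j \<le> \<chi>!j'" using \<chi>_mono j' by simp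
    moreover have "\<chi>!j' = \<psi>!k'" using \<chi>_nth j' by simp
    moreover have "\<psi>!k' \<le> \<psi>!k1" using \<psi> that k1 by (simp add: sorted_nth_mono)
    ultimately show False using c \<chi>j K(3) sj by simp
  qed
  have "cComp D (cs!j) (zy X j) = cComp D (gsg!k) (cComp D (fsg!j) (zy X j))"
    unfolding cs_nth[OF j] k_def[symmetric] using j k
    by (intro cat_assoc'[OF cat legs(2) arrs(2) arrs(4), symmetric]) (auto simp: k_def)
  also have "\<dots> = E' k" unfolding E'_def using f_squares(2)[OF j last] k_def by simp
  also have "\<dots> = E' k1"
  proof (cases "k = k1")
    case False
    hence lt: "k < k1" using k1 by simp
    have "E' k = E k1"
    proof (rule E'_eq_E_chain[OF lt k1(2)])
      show "\<forall>k'. k \<le> k' \<and> k' < k1 \<longrightarrow> \<psi>!k' = \<psi>!Suc k'"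
        by (rule sorted_nth_const_step[OF \<psi>(2)]) (use K k1 \<psi>(1) i_def in auto)
      show "\<forall>k'. k < k' \<and> k' < k1 \<longrightarrow> k' \<notin> set \<phi>" using gap by auto
    qed
    also have "\<dots> = E' k1" using gap lt k1 by (intro E_eq_E'_outside_image) auto
    finally show ?thesis .
  qed simp
  also have "\<dots> = cComp D (cComp D (gsg!k1) (zy Y k1)) (fr!K)"
    unfolding E'_def k1(3)[symmetric] using k1 by (intro cat_assoc'[OF cat arrs(1) legs(4) arrs(4)]) auto
  also have "\<dots> = cComp D (cComp D (zy W i) (gr!Suc i)) (fr!K)"
    using g_squares(2)[of k1] hl(4) K k1 K_def k1_def \<psi>(1) by auto
  also have "\<dots> = cComp D (zy W i) (cComp D (gr!Suc i) (fr!K))"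
    using i K \<psi>(1) K_def by (intro cat_assoc'[OF cat arrs(1) arrs(3) legs(6), symmetric]) auto
  also have "\<dots> = cComp D (zy W (\<chi>!j)) (cr!Suc (\<chi>!j))" using \<chi>j cr_nth[of "Suc i"] i K_def by simp
  finally show ?thesis .
qed

lemma comp_square_inner:
  assumes j: "Suc j < zlen X" and c: "\<chi>!j = \<chi>!Suc j"
  shows "cComp D (cs!j) (zy X j) = cComp D (cs!Suc j) (zx X (Suc j))"
proof -
  define a where "a = \<phi>!j"
  define b where "b = \<phi>!Suc j"
  have j': "j < zlen X" using j by simp
  have ab: "a \<le> b" using \<phi> j a_def b_def by (simp add: sorted_nth_mono)
  have a: "a < zlen Y" and b: "b < zlen Y" using \<phi>(3) j j' a_def b_def by auto
  have "cComp D (cs!j) (zy X j) = cComp D (gsg!a) (cComp D (fsg!j) (zy X j))"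
    unfolding cs_nth[OF j'] a_def[symmetric] using j a
    by (intro cat_assoc'[OF cat legs(2) arrs(2) arrs(4), symmetric]) (auto simp: a_def)
  also have "\<dots> = cComp D (gsg!b) (cComp D (fsg!Suc j) (zx X (Suc j)))"
  proof (cases "a = b")
    case True
    thus ?thesis using f_squares(3)[of j] j a_def b_def by simp
  next
    case False
    hence lt: "a < b" using ab by simp
    have "cComp D (gsg!a) (cComp D (fsg!j) (zy X j)) = E' a"
      unfolding E'_def using f_squares(2)[OF j'] lt a_def b_def by simp
    also have "\<dots> = E b"
    proof (rule E'_eq_E_chain[OF lt b])
      have "\<psi>!a = \<psi>!b" using c \<chi>_nth j j' a_def b_def by simp
      moreover have "b < length \<psi>" using b \<psi>(1) by simp
      ultimately show "\<forall>k'. a \<le> k' \<and> k' < b \<longrightarrow> \<psi>!k' = \<psi>!Suc k'"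
        using sorted_nth_const_step[OF \<psi>(2)] by blast
      show "\<forall>k'. a < k' \<and> k' < b \<longrightarrow> k' \<notin> set \<phi>"
      proof (intro allI impI notI)
        fix k' assume k': "a < k' \<and> k' < b" "k' \<in> set \<phi>"
        then obtain j' where j'': "j' < zlen X" "\<phi>!j' = k'" using \<phi>(1) by (auto simp: in_set_conv_nth)
        have "j < j'" using sorted_nth_less_imp_less[OF \<phi>(2), of j j'] j'' k' \<phi>(1) a_def j' by simp
        moreover have "j' < Suc j"
          using sorted_nth_less_imp_less[OF \<phi>(2), of j' "Suc j"] j'' k' \<phi>(1) b_def by simp
        ultimately show False by simp
      qed
    qed
    also have "\<dots> = cComp D (gsg!b) (cComp D (fsg!Suc j) (zx X (Suc j)))"
      unfolding E_def using f_squares(1)[OF j] lt a_def b_def by simp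
    finally show ?thesis .
  qed
  also have "\<dots> = cComp D (cs!Suc j) (zx X (Suc j))"
    unfolding cs_nth[OF j] b_def[symmetric] using j b
    by (intro cat_assoc'[OF cat legs(1) arrs(2) arrs(4)]) (auto simp: b_def)
  finally show ?thesis .
qed

lemma comp_square_outside_image:
  assumes i: "i < zlen W" and ni: "i \<notin> set \<chi>"
  shows "cComp D (zx W i) (cr!i) = cComp D (zy W i) (cr!Suc i)"
proof (cases "i \<in> set \<psi>")
  case False
  define k0 where "k0 = hat \<psi> i"
  have h: "hat \<psi> (Suc i) = k0" using hat_not_in[OF False] k0_def by simp
  have k0: "k0 \<le> zlen Y" using hat_le[of \<psi> i] \<psi>(1) k0_def by simp
  have "cComp D (zx W i) (cr!i) = cComp D (cComp D (zx W i) (gr!i)) (fr!k0)"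
    unfolding cr_nth[OF less_imp_le[OF i]] k0_def[symmetric] using i k0
    by (intro cat_assoc'[OF cat arrs(1) arrs(3) legs(5)]) (auto simp: k0_def)
  also have "\<dots> = cComp D (cComp D (zy W i) (gr!Suc i)) (fr!k0)" using g_squares(4)[OF i False] by simp
  also have "\<dots> = cComp D (zy W i) (cr!Suc i)"
    unfolding cr_nth[OF Suc_leI[OF i]] h using i k0
    by (intro cat_assoc'[OF cat arrs(1) arrs(3) legs(6), symmetric]) (auto simp: h k0_def)
  finally show ?thesis .
next
  case True
  then obtain k where k: "k < zlen Y" "\<psi>!k = i" using \<psi>(1) by (auto simp: in_set_conv_nth)
  note hf = hat_fiber_first[OF \<psi>(2), of k i, unfolded \<psi>(1), OF k]
  note hl = hat_fiber_last[OF \<psi>(2), of k i, unfolded \<psi>(1), OF k]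
  define k0 where "k0 = hat \<psi> i"
  define K where "K = hat \<psi> (Suc i)"
  define k1 where "k1 = K - 1"
  have k0: "k0 \<le> k" "\<psi>!k0 = i" "k0 = 0 \<or> \<psi>!(k0-1) < \<psi>!k0" using hf k0_def by auto
  have K: "k < K" "K \<le> zlen Y" "\<psi>!k1 = i" using hl K_def k1_def by auto
  have k1: "k \<le> k1" "k1 < zlen Y" "Suc k1 = K" using K k1_def by auto
  have gap: "k' \<notin> set \<phi>" if "k0 \<le> k'" "k' \<le> k1" for k'
  proof
    assume "k' \<in> set \<phi>"
    then obtain j' where j': "j' < zlen X" "\<phi>!j' = k'" using \<phi>(1) by (auto simp: in_set_conv_nth)
    have "\<psi>!k' = i" using sorted_nth_between[OF \<psi>(2) that] k1 \<psi>(1) k0 K by simp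
    hence "\<chi>!j' = i" using \<chi>_nth j' by simp
    thus False using ni j' \<phi>(1) by (metis length_map length_upt minus_nat.diff_0 nth_mem \<chi>_def)
  qed
  have "cComp D (zx W i) (cr!i) = cComp D (cComp D (zx W i) (gr!i)) (fr!k0)"
    unfolding cr_nth[OF less_imp_le[OF i]] k0_def[symmetric] using i k0 k
    by (intro cat_assoc'[OF cat arrs(1) arrs(3) legs(5)]) (auto simp: k0_def)
  also have "\<dots> = cComp D (cComp D (gsg!k0) (zx Y k0)) (fr!k0)" using g_squares(1)[of k0] k0 k by simp
  also have "\<dots> = E k0"
    unfolding E_def using k0 k by (intro cat_assoc'[OF cat arrs(1) legs(3) arrs(4), symmetric]) auto
  also have "\<dots> = E' k0" using gap k0 k1 k by (intro E_eq_E'_outside_image) auto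
  also have "\<dots> = E' k1"
  proof (cases "k0 = k1")
    case False
    hence lt: "k0 < k1" using k0 k1 by simp
    have "E' k0 = E k1"
    proof (rule E'_eq_E_chain[OF lt k1(2)])
      show "\<forall>k'. k0 \<le> k' \<and> k' < k1 \<longrightarrow> \<psi>!k' = \<psi>!Suc k'"
        by (rule sorted_nth_const_step[OF \<psi>(2)]) (use K k1 k0 \<psi>(1) in auto)
      show "\<forall>k'. k0 < k' \<and> k' < k1 \<longrightarrow> k' \<notin> set \<phi>" using gap by auto
    qed
    also have "\<dots> = E' k1" using gap lt k1 by (intro E_eq_E'_outside_image) auto
    finally show ?thesis .
  qed simp
  also have "\<dots> = cComp D (cComp D (gsg!k1) (zy Y k1)) (fr!K)"
    unfolding E'_def k1(3)[symmetric] using k1 by (intro cat_assoc'[OF cat arrs(1) legs(4) arrs(4)]) auto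
  also have "\<dots> = cComp D (cComp D (zy W i) (gr!Suc i)) (fr!K)"
    using g_squares(2)[of k1] hl(4) K k1 K_def k1_def \<psi>(1) by auto
  also have "\<dots> = cComp D (zy W i) (cr!Suc i)"
    unfolding cr_nth[OF Suc_leI[OF i]] K_def[symmetric] using i K
    by (intro cat_assoc'[OF cat arrs(1) arrs(3) legs(6), symmetric]) (auto simp: K_def)
  finally show ?thesis .
qed

lemma comp_commutes: "zm_commutes D X W \<chi> cr cs"
  unfolding zm_commutes_def
  using comp_square_first comp_square_last comp_square_inner comp_square_outside_image by blast

end

lemma zig_comp_closed:
  assumes cat: "is_category D" and f: "zig_map D f" and g: "zig_map D g" and fg: "mcod f = mdom g"
  shows "zig_map D (zig_comp D g f)"
proof -
  obtain X Y \<phi> fr fsg where F: "f = ZM X Y \<phi> fr fsg" "zm_typed D X Y \<phi> fr fsg"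
    "zm_commutes D X Y \<phi> fr fsg"
    using f by (rule zig_mapE)
  obtain Y' W \<psi> gr gsg where G: "g = ZM Y' W \<psi> gr gsg" "zm_typed D Y' W \<psi> gr gsg"
    "zm_commutes D Y' W \<psi> gr gsg"
    using g by (rule zig_mapE)
  have "Y' = Y" using fg F G by simp
  then interpret zig_composable D X Y W \<phi> \<psi> fr fsg gr gsg
    using cat F G by unfold_locales simp_all
  have "zig_comp D g f = ZM X W \<chi> cr cs"
    unfolding F(1) G(1) zig_comp_def \<chi>_def cr_def cs_def by simp
  thus ?thesis using zig_mapI[OF comp_typed comp_commutes] by simp
qed

lemma zig_id_map:
  assumes cat: "is_category D" and X: "zig_obj D X"
  shows "zig_map D (zig_id D X)"
proof -
  let ?n = "zlen X"
  let ?r = "map (\<lambda>i. cId D (zr X i)) [0..<Suc ?n]" and ?s = "map (\<lambda>j. cId D (zs X j)) [0..<?n]"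
  note legs = zig_obj_arr(3,4)[OF X]
  have "zm_typed D X X [0..<?n] ?r ?s"
    unfolding zm_typed_def delta_map_def
    using X cat_id[OF cat zig_obj_arr(1)[OF X]] cat_id[OF cat zig_obj_arr(2)[OF X]] hat_upt
    by (simp del: upt_Suc add: nth_append less_Suc_eq_le)
  moreover have "zm_commutes D X X [0..<?n] ?r ?s"
    unfolding zm_commutes_def
    using cat_idl[OF cat legs(1)] cat_idr[OF cat legs(1)] cat_idl[OF cat legs(2)] cat_idr[OF cat legs(2)]
    by (auto simp del: upt_Suc)
  ultimately show ?thesis unfolding zig_id_def by (rule zig_mapI)
qed

lemma zig_assoc:
  assumes cat: "is_category D" and f: "zig_map D f" and g: "zig_map D g" and h: "zig_map D h"
    and fg: "mcod f = mdom g" and gh: "mcod g = mdom h"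
  shows "zig_comp D h (zig_comp D g f) = zig_comp D (zig_comp D h g) f"
proof (rule zig_eqI)
  have gf: "zig_map D (zig_comp D g f)" and hg: "zig_map D (zig_comp D h g)"
    using zig_comp_closed[OF cat] f g h fg gh by auto
  show "zig_map D (zig_comp D h (zig_comp D g f))" "zig_map D (zig_comp D (zig_comp D h g) f)"
    using zig_comp_closed[OF cat] f h gf hg fg gh by (auto simp: zig_comp_acc)
  note lf = zig_map_lengths[OF f] and lg = zig_map_lengths[OF g] and lh = zig_map_lengths[OF h]
  show "msing_map (zig_comp D h (zig_comp D g f)) = msing_map (zig_comp D (zig_comp D h g) f)"
    using lf lg fg by (auto simp: zig_comp_acc intro!: nth_equalityI)
  fix i assume "i \<le> zlen (mcod (zig_comp D h (zig_comp D g f)))"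
  hence i: "i \<le> zlen (mcod h)" by (simp add: zig_comp_acc)
  have hh: "hat (msing_map h) i \<le> zlen (mcod g)" using hat_le[of "msing_map h" i] lh gh by simp
  have hg_hat: "hat (msing_map (zig_comp D h g)) i = hat (msing_map g) (hat (msing_map h) i)"
    unfolding zig_comp_acc lg(1)[symmetric] by (rule hat_comp[OF lh(2)]) (use lg lh gh in auto)
  have hf: "hat (msing_map g) (hat (msing_map h) i) \<le> zlen (mcod f)"
    using hat_le[of "msing_map g"] lg fg by (metis)
  show "mreg (zig_comp D h (zig_comp D g f)) i = mreg (zig_comp D (zig_comp D h g) f) i"
    using i hh hg_hat cat_assoc[OF cat zig_map_acc(4)[OF f hf] _ zig_map_acc(4)[OF h i]]
      zig_map_acc(4)[OF g hh] fg gh by (simp add: zig_comp_acc)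
next
  note lf = zig_map_lengths[OF f] and lg = zig_map_lengths[OF g]
  fix j assume "j < zlen (mdom (zig_comp D h (zig_comp D g f)))"
  hence j: "j < zlen (mdom f)" by (simp add: zig_comp_acc)
  have k: "msing_map f ! j < zlen (mdom g)" using lf(3)[OF j] fg by simp
  show "msing (zig_comp D h (zig_comp D g f)) j = msing (zig_comp D (zig_comp D h g) f) j"
    using j k lf lg cat_assoc[OF cat zig_map_acc(5)[OF f j] _ zig_map_acc(5)[OF h]]
      zig_map_acc(5)[OF g k] lg(3)[OF k] fg gh by (simp add: zig_comp_acc)
qed (simp_all add: zig_comp_acc)

lemma zig_idl:
  assumes cat: "is_category D" and f: "zig_map D f"
  shows "zig_comp D (zig_id D (mcod f)) f = f"
proof (rule zig_eqI[OF _ f])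
  note lf = zig_map_lengths[OF f]
  show "zig_map D (zig_comp D (zig_id D (mcod f)) f)"
    using zig_comp_closed[OF cat f zig_id_map[OF cat zig_map_acc(2)[OF f]]] by (simp add: zig_id_acc)
  show "msing_map (zig_comp D (zig_id D (mcod f)) f) = msing_map f"
    using lf by (auto simp: zig_comp_acc zig_id_acc intro!: nth_equalityI)
  fix i assume "i \<le> zlen (mcod (zig_comp D (zig_id D (mcod f)) f))"
  hence i: "i \<le> zlen (mcod f)" by (simp add: zig_comp_acc zig_id_acc)
  show "mreg (zig_comp D (zig_id D (mcod f)) f) i = mreg f i"
    using i cat_idl[OF cat zig_map_acc(4)[OF f i]] hat_upt[OF i] by (simp add: zig_comp_acc zig_id_acc)
next
  note lf = zig_map_lengths[OF f]
  fix j assume "j < zlen (mdom (zig_comp D (zig_id D (mcod f)) f))"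
  hence j: "j < zlen (mdom f)" by (simp add: zig_comp_acc)
  show "msing (zig_comp D (zig_id D (mcod f)) f) j = msing f j"
    using j lf cat_idl[OF cat zig_map_acc(5)[OF f j]] by (simp add: zig_comp_acc zig_id_acc)
qed (simp_all add: zig_comp_acc zig_id_acc)

lemma zig_idr:
  assumes cat: "is_category D" and f: "zig_map D f"
  shows "zig_comp D f (zig_id D (mdom f)) = f"
proof (rule zig_eqI[OF _ f])
  note lf = zig_map_lengths[OF f]
  show "zig_map D (zig_comp D f (zig_id D (mdom f)))"
    using zig_comp_closed[OF cat zig_id_map[OF cat zig_map_acc(1)[OF f]] f] by (simp add: zig_id_acc)
  show "msing_map (zig_comp D f (zig_id D (mdom f))) = msing_map f"
    using lf by (auto simp: zig_comp_acc zig_id_acc intro!: nth_equalityI)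
  fix i assume "i \<le> zlen (mcod (zig_comp D f (zig_id D (mdom f))))"
  hence i: "i \<le> zlen (mcod f)" by (simp add: zig_comp_acc)
  have "hat (msing_map f) i \<le> zlen (mdom f)" using hat_le lf(1) by metis
  thus "mreg (zig_comp D f (zig_id D (mdom f))) i = mreg f i"
    using i cat_idr[OF cat zig_map_acc(4)[OF f i]] by (simp add: zig_comp_acc zig_id_acc)
next
  note lf = zig_map_lengths[OF f]
  fix j assume "j < zlen (mdom (zig_comp D f (zig_id D (mdom f))))"
  hence j: "j < zlen (mdom f)" by (simp add: zig_comp_acc zig_id_acc)
  show "msing (zig_comp D f (zig_id D (mdom f))) j = msing f j"
    using j lf cat_idr[OF cat zig_map_acc(5)[OF f j]] by (simp add: zig_comp_acc zig_id_acc)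
qed (simp_all add: zig_comp_acc zig_id_acc)

lemma Z_category:
  assumes cat: "is_category D"
  shows "is_category (Z D)"
  unfolding is_category_def Z_simps
  using zig_id_map[OF cat] zig_comp_closed[OF cat] zig_assoc[OF cat] zig_idl[OF cat] zig_idr[OF cat]
  by (simp add: zig_comp_acc zig_id_acc zig_map_acc(1,2))

lemma lift_category: "is_category C \<Longrightarrow> is_category (lift C)"
  unfolding is_category_def lift_def by (auto simp: image_iff)

lemma Zn_0[simp]: "Zn C 0 = lift C" by (simp add: Zn_def)
lemma Zn_Suc[simp]: "Zn C (Suc n) = Z (Zn C n)" by (simp add: Zn_def)

lemma Zn_category: "is_category C \<Longrightarrow> is_category (Zn C n)"
  by (induction n) (auto intro: Z_category lift_category)

section \<open>Degeneracy maps\<close>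

text \<open>A simple degeneracy map \<open>f : X \<rightarrow> Y\<close> factors as \<open>w \<circ> h\<close>, where \<open>h\<close> has identity slices
  and maps \<open>X\<close> onto its image \<open>img\<close> in \<open>Y\<close> (identity cospans at the heights missed by \<open>f\<^sub>s\<close>), and
  \<open>w\<close> is vertical with the slices of \<open>f\<close>. Cocartesianness of \<open>f\<close> yields a vertical \<open>v\<close> with
  \<open>v \<circ> f = h\<close>, and uniqueness forces \<open>w \<circ> v = id\<close>; so \<open>v\<close> inverts the slices of \<open>f\<close>.\<close>

locale simple_degeneracy =
  fixes D :: "(('o, 'm) zo, ('o, 'm) zm) cat" and X Y :: "('o, 'm) zo"
    and \<phi> :: "nat list" and fr fsg :: "('o, 'm) zm list"
  assumes cat: "is_category D" and simple: "simple_deg D (ZM X Y \<phi> fr fsg)"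
begin

abbreviation "f \<equiv> ZM X Y \<phi> fr fsg"
abbreviation "n \<equiv> zlen X"
abbreviation "m \<equiv> zlen Y"

lemma f_map: "zig_map D f"
  using simple unfolding simple_deg_def by simp

lemma typed: "zm_typed D X Y \<phi> fr fsg" and commutes: "zm_commutes D X Y \<phi> fr fsg"
  using f_map unfolding zig_map_ZM_iff by auto

lemma strict: "sorted_wrt (<) \<phi>"
  using simple unfolding simple_deg_def delta_mono_def by simp

lemma objs: "zig_obj D X" "zig_obj D Y"
  using typed unfolding zm_typed_def by auto

lemma \<phi>: "length \<phi> = n" "sorted \<phi>" "\<And>j. j < n \<Longrightarrow> \<phi>!j < m"
  using typed unfolding zm_typed_def delta_map_def by auto

lemma arrs:
  "\<And>i. i \<le> m \<Longrightarrow> arr D (fr!i) (zr X (hat \<phi> i)) (zr Y i)"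
  "\<And>j. j < n \<Longrightarrow> arr D (fsg!j) (zs X j) (zs Y (\<phi>!j))"
  "length fr = Suc m" "length fsg = n"
  using typed unfolding zm_typed_def by auto

lemma hat_\<phi>: "j < n \<Longrightarrow> hat \<phi> (\<phi>!j) = j" "j < n \<Longrightarrow> hat \<phi> (Suc (\<phi>!j)) = Suc j"
  using hat_strict_at[OF strict] \<phi>(1) by auto

lemma squares:
  "\<And>j. j < n \<Longrightarrow> cComp D (fsg!j) (zx X j) = cComp D (zx Y (\<phi>!j)) (fr!(\<phi>!j))"
  "\<And>j. j < n \<Longrightarrow> cComp D (fsg!j) (zy X j) = cComp D (zy Y (\<phi>!j)) (fr!Suc (\<phi>!j))"
  "\<And>i. i < m \<Longrightarrow> i \<notin> set \<phi> \<Longrightarrow> cComp D (zx Y i) (fr!i) = cComp D (zy Y i) (fr!Suc i)"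
proof -
  have "j = 0 \<or> \<phi>!(j-1) < \<phi>!j" if "j < n" for j
    using that sorted_wrt_nth_less[OF strict, of "j-1" j] \<phi>(1) by (cases j) auto
  moreover have "Suc j = n \<or> \<phi>!j < \<phi>!Suc j" if "j < n" for j
    using that sorted_wrt_nth_less[OF strict, of j "Suc j"] \<phi>(1) by (cases "Suc j = n") auto
  ultimately show "\<And>j. j < n \<Longrightarrow> cComp D (fsg!j) (zx X j) = cComp D (zx Y (\<phi>!j)) (fr!(\<phi>!j))"
    "\<And>j. j < n \<Longrightarrow> cComp D (fsg!j) (zy X j) = cComp D (zy Y (\<phi>!j)) (fr!Suc (\<phi>!j))"
    "\<And>i. i < m \<Longrightarrow> i \<notin> set \<phi> \<Longrightarrow> cComp D (zx Y i) (fr!i) = cComp D (zy Y i) (fr!Suc i)"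
    using commutes unfolding zm_commutes_def by auto
qed

lemma legs:
  "\<And>j. j < n \<Longrightarrow> arr D (zx X j) (zr X j) (zs X j)"
  "\<And>j. j < n \<Longrightarrow> arr D (zy X j) (zr X (Suc j)) (zs X j)"
  "\<And>j. j < m \<Longrightarrow> arr D (zx Y j) (zr Y j) (zs Y j)"
  "\<And>j. j < m \<Longrightarrow> arr D (zy Y j) (zr Y (Suc j)) (zs Y j)"
  using zig_obj_arr(3,4)[OF objs(1)] zig_obj_arr(3,4)[OF objs(2)] by auto

definition "img_r i = zr X (hat \<phi> i)"
definition "img_s k = (if k \<in> set \<phi> then zs X (hat \<phi> k) else zr X (hat \<phi> k))"
definition "img_x k = (if k \<in> set \<phi> then zx X (hat \<phi> k) else cId D (zr X (hat \<phi> k)))"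
definition "img_y k = (if k \<in> set \<phi> then zy X (hat \<phi> k) else cId D (zr X (hat \<phi> k)))"
definition "img = ZZ (map img_r [0..<Suc m]) (map img_s [0..<m]) (map img_x [0..<m]) (map img_y [0..<m])"

lemma img_simps:
  "zlen img = m" "\<And>i. i \<le> m \<Longrightarrow> zr img i = img_r i" "\<And>k. k < m \<Longrightarrow> zs img k = img_s k"
  "\<And>k. k < m \<Longrightarrow> zx img k = img_x k" "\<And>k. k < m \<Longrightarrow> zy img k = img_y k"
  unfolding img_def by (simp_all del: upt_Suc add: less_Suc_eq_le[symmetric])

lemma img_at_\<phi>:
  assumes "j < n"
  shows "img_r (\<phi>!j) = zr X j" "img_r (Suc (\<phi>!j)) = zr X (Suc j)" "img_s (\<phi>!j) = zs X j"
    "img_x (\<phi>!j) = zx X j" "img_y (\<phi>!j) = zy X j"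
  using hat_\<phi>[OF assms] assms \<phi>(1) unfolding img_r_def img_s_def img_x_def img_y_def by auto

lemma hat_outside_image: "k \<notin> set \<phi> \<Longrightarrow> img_r (Suc k) = img_r k"
  unfolding img_r_def by (simp add: hat_not_in)

lemma img_legs:
  assumes k: "k < m"
  shows "arr D (img_x k) (img_r k) (img_s k)" "arr D (img_y k) (img_r (Suc k)) (img_s k)"
proof -
  have "arr D (img_x k) (img_r k) (img_s k) \<and> arr D (img_y k) (img_r (Suc k)) (img_s k)"
  proof (cases "k \<in> set \<phi>")
    case True
    then obtain j where "j < n" "\<phi>!j = k" using \<phi>(1) by (auto simp: in_set_conv_nth)
    thus ?thesis using legs(1,2) img_at_\<phi> by auto
  next
    case False
    have "hat \<phi> k \<le> n" using hat_le \<phi>(1) by metis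
    thus ?thesis using cat_id[OF cat zig_obj_arr(1)[OF objs(1)]] hat_outside_image[OF False] False
      unfolding img_x_def img_y_def img_s_def by (simp add: img_r_def)
  qed
  thus "arr D (img_x k) (img_r k) (img_s k)" "arr D (img_y k) (img_r (Suc k)) (img_s k)" by auto
qed

lemma img_obj: "zig_obj D img"
proof -
  have "img_r i \<in> cObj D" for i
    using zig_obj_arr(1)[OF objs(1)] hat_le \<phi>(1) unfolding img_r_def by metis
  moreover have "k < m \<Longrightarrow> img_s k \<in> cObj D" for k
    using img_legs cat_arr_obj[OF cat] by blast
  ultimately show ?thesis unfolding zig_obj_def img_def
    using img_legs unfolding arr_def by (auto simp del: upt_Suc simp: nth_append)
qed

definition "h = ZM X img \<phi> (map (\<lambda>i. cId D (img_r i)) [0..<Suc m]) (map (\<lambda>j. cId D (zs X j)) [0..<n])"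

lemma h_map: "zig_map D h"
  unfolding h_def zig_map_ZM_iff
proof
  have "hat \<phi> i < Suc n" for i using hat_le[of \<phi> i] \<phi>(1) by simp
  thus "zm_typed D X img \<phi> (map (\<lambda>i. cId D (img_r i)) [0..<Suc m]) (map (\<lambda>j. cId D (zs X j)) [0..<n])"
    unfolding zm_typed_def
    using objs img_obj img_simps typed img_at_\<phi>(3) \<phi>
      cat_id[OF cat zig_obj_arr(2)[OF objs(1)]] cat_id[OF cat zig_obj_arr(1)[OF objs(1)]]
    by (auto simp del: upt_Suc simp: zm_typed_def less_Suc_eq_le[symmetric] img_r_def)
  show "zm_commutes D X img \<phi> (map (\<lambda>i. cId D (img_r i)) [0..<Suc m]) (map (\<lambda>j. cId D (zs X j)) [0..<n])"
    unfolding zm_commutes_def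
  proof (intro conjI allI impI)
    fix j assume j: "j < n"
    have l: "\<phi>!j < m" "Suc (\<phi>!j) \<le> m" using \<phi>(3)[OF j] by auto
    show "cComp D (map (\<lambda>j. cId D (zs X j)) [0..<n] ! j) (zx X j) =
          cComp D (zx img (\<phi>!j)) (map (\<lambda>i. cId D (img_r i)) [0..<Suc m] ! (\<phi>!j))"
      using j l img_simps img_at_\<phi>[OF j] cat_idl[OF cat legs(1)[OF j]] cat_idr[OF cat legs(1)[OF j]]
      by (simp del: upt_Suc add: less_Suc_eq_le[symmetric])
    show "cComp D (map (\<lambda>j. cId D (zs X j)) [0..<n] ! j) (zy X j) =
          cComp D (zy img (\<phi>!j)) (map (\<lambda>i. cId D (img_r i)) [0..<Suc m] ! Suc (\<phi>!j))"
      using j l img_simps img_at_\<phi>[OF j] cat_idl[OF cat legs(2)[OF j]] cat_idr[OF cat legs(2)[OF j]]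
      by (simp del: upt_Suc add: less_Suc_eq_le[symmetric])
  next
    fix j assume "Suc j < n \<and> \<phi>!j = \<phi>!Suc j"
    hence False using sorted_wrt_nth_less[OF strict, of j "Suc j"] \<phi>(1) by simp
    thus "cComp D (map (\<lambda>j. cId D (zs X j)) [0..<n] ! j) (zy X j) =
          cComp D (map (\<lambda>j. cId D (zs X j)) [0..<n] ! Suc j) (zx X (Suc j))" ..
  next
    fix k assume k: "k < zlen img" "k \<notin> set \<phi>"
    have "img_x k = cId D (img_r k)" "img_y k = cId D (img_r k)"
      using k unfolding img_x_def img_y_def img_r_def by auto
    thus "cComp D (zx img k) (map (\<lambda>i. cId D (img_r i)) [0..<Suc m] ! k) =
          cComp D (zy img k) (map (\<lambda>i. cId D (img_r i)) [0..<Suc m] ! Suc k)"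
      using k img_simps hat_outside_image[OF k(2)] by (simp del: upt_Suc add: less_Suc_eq_le[symmetric])
  qed
qed

definition "w_s k = (if k \<in> set \<phi> then fsg!(hat \<phi> k) else cComp D (zx Y k) (fr!k))"
definition "w = ZM img Y [0..<m] fr (map w_s [0..<m])"

lemma w_s_at_\<phi>: "j < n \<Longrightarrow> w_s (\<phi>!j) = fsg!j"
  using hat_\<phi> \<phi>(1) unfolding w_s_def by auto

lemma w_s_arr:
  assumes k: "k < m"
  shows "arr D (w_s k) (img_s k) (zs Y k)"
proof (cases "k \<in> set \<phi>")
  case True
  then obtain j where "j < n" "\<phi>!j = k" using \<phi>(1) by (auto simp: in_set_conv_nth)
  thus ?thesis using arrs(2) img_at_\<phi>(3) w_s_at_\<phi> by auto
next
  case False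
  thus ?thesis using cat_comp[OF cat arrs(1) legs(3)[OF k]] k unfolding w_s_def img_s_def by simp
qed

lemma w_map: "zig_map D w"
  unfolding w_def zig_map_ZM_iff
proof
  show "zm_typed D img Y [0..<m] fr (map w_s [0..<m])"
    unfolding zm_typed_def delta_map_def
    using img_obj objs(2) arrs(1,3) w_s_arr img_simps hat_upt by (auto simp: img_r_def)
  show "zm_commutes D img Y [0..<m] fr (map w_s [0..<m])"
    unfolding zm_commutes_def img_simps(1)
  proof (intro conjI allI impI)
    fix k assume k: "k < m"
    have "cComp D (w_s k) (img_x k) = cComp D (zx Y k) (fr!k) \<and>
          cComp D (w_s k) (img_y k) = cComp D (zy Y k) (fr!Suc k)"
    proof (cases "k \<in> set \<phi>")
      case True
      then obtain j where "j < n" "\<phi>!j = k" using \<phi>(1) by (auto simp: in_set_conv_nth)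
      thus ?thesis using squares(1,2) img_at_\<phi> w_s_at_\<phi> by auto
    next
      case False
      have "arr D (cComp D (zx Y k) (fr!k)) (zr X (hat \<phi> k)) (zs Y k)"
        using cat_comp[OF cat arrs(1) legs(3)[OF k]] k by simp
      thus ?thesis using False cat_idr[OF cat] squares(3)[OF k False]
        unfolding w_s_def img_x_def img_y_def by simp
    qed
    thus "cComp D (map w_s [0..<m] ! k) (zx img k) = cComp D (zx Y ([0..<m] ! k)) (fr ! ([0..<m] ! k))"
      "cComp D (map w_s [0..<m] ! k) (zy img k) = cComp D (zy Y ([0..<m] ! k)) (fr ! Suc ([0..<m] ! k))"
      using k img_simps by simp_all
  qed auto
qed

lemma w_comp_h: "zig_comp D w h = f"
proof (rule zig_eqI[OF _ f_map])
  show "zig_map D (zig_comp D w h)"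
    using zig_comp_closed[OF cat h_map w_map] by (simp add: h_def w_def)
  show "msing_map (zig_comp D w h) = msing_map f"
    using \<phi> by (auto simp: zig_comp_acc h_def w_def intro!: nth_equalityI)
  fix i assume "i \<le> zlen (mcod (zig_comp D w h))"
  hence i: "i \<le> m" by (simp add: zig_comp_acc w_def)
  show "mreg (zig_comp D w h) i = mreg f i"
    using i hat_upt[OF i] cat_idr[OF cat arrs(1)[OF i]]
    by (simp del: upt_Suc add: zig_comp_acc h_def w_def less_Suc_eq_le[symmetric] img_r_def)
next
  fix j assume "j < zlen (mdom (zig_comp D w h))"
  hence j: "j < n" by (simp add: zig_comp_acc h_def)
  show "msing (zig_comp D w h) j = msing f j"
    using j \<phi> w_s_at_\<phi>[OF j] cat_idr[OF cat arrs(2)[OF j]] by (simp add: zig_comp_acc h_def w_def)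
qed (simp_all add: zig_comp_acc h_def w_def)

lemma cocartesian:
  assumes "zig_map D k" "mdom k = X" "delta_map u m (zlen (mcod k))"
    "map (\<lambda>j. u!(\<phi>!j)) [0..<n] = msing_map k"
  shows "\<exists>!v. zig_map D v \<and> mdom v = Y \<and> mcod v = mcod k \<and> zig_comp D v f = k \<and> msing_map v = u"
  using simple assms unfolding simple_deg_def pi_cocartesian_def by simp

lemma h_lift_exists:
  obtains v where "zig_map D v" "mdom v = Y" "mcod v = img" "msing_map v = [0..<m]"
    "zig_comp D v f = h"
proof -
  have "delta_map [0..<m] m (zlen (mcod h))" by (simp add: h_def img_simps delta_map_def)
  moreover have "map (\<lambda>j. [0..<m]!(\<phi>!j)) [0..<n] = msing_map h"
    unfolding h_def using \<phi> by (auto intro: nth_equalityI)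
  ultimately show ?thesis using cocartesian[OF h_map] that by (auto simp: h_def)
qed

lemma w_comp_lift:
  assumes v: "zig_map D v" "mdom v = Y" "mcod v = img" "msing_map v = [0..<m]" "zig_comp D v f = h"
  shows "zig_comp D w v = zig_id D Y"
proof -
  have "delta_map [0..<m] m (zlen (mcod f))" by (simp add: delta_map_def)
  moreover have "map (\<lambda>j. [0..<m]!(\<phi>!j)) [0..<n] = msing_map f" using \<phi> by (auto intro: nth_equalityI)
  ultimately have unique: "\<exists>!u. zig_map D u \<and> mdom u = Y \<and> mcod u = Y \<and> zig_comp D u f = f \<and>
      msing_map u = [0..<m]"
    using cocartesian[OF f_map] by simp
  have "zig_map D (zig_comp D w v) \<and> mdom (zig_comp D w v) = Y \<and> mcod (zig_comp D w v) = Y \<and>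
      zig_comp D (zig_comp D w v) f = f \<and> msing_map (zig_comp D w v) = [0..<m]"
  proof (intro conjI)
    show "zig_map D (zig_comp D w v)"
      using zig_comp_closed[OF cat v(1) w_map] v(3) by (simp add: w_def)
    show "zig_comp D (zig_comp D w v) f = f"
      using zig_assoc[OF cat f_map v(1) w_map] v w_comp_h by (simp add: w_def)
    show "msing_map (zig_comp D w v) = [0..<m]"
      using v(4) by (auto simp: zig_comp_acc w_def intro: nth_equalityI)
  qed (simp_all add: zig_comp_acc w_def v(2))
  moreover have "zig_map D (zig_id D Y) \<and> mdom (zig_id D Y) = Y \<and> mcod (zig_id D Y) = Y \<and>
      zig_comp D (zig_id D Y) f = f \<and> msing_map (zig_id D Y) = [0..<m]"
    using zig_id_map[OF cat objs(2)] zig_idl[OF cat f_map] by (simp add: zig_id_acc)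
  ultimately show ?thesis using unique by blast
qed

lemma slices_iso: "i \<le> m \<Longrightarrow> iso D (fr!i)" "j < n \<Longrightarrow> iso D (fsg!j)"
proof -
  obtain v where v: "zig_map D v" "mdom v = Y" "mcod v = img" "msing_map v = [0..<m]"
    "zig_comp D v f = h"
    by (rule h_lift_exists)
  note wv = w_comp_lift[OF v]
  note av = zig_map_acc[OF v(1), unfolded v(2-4)]
  show "iso D (fr!i)" if i: "i \<le> m"
  proof -
    have "mreg (zig_comp D v f) i = cComp D (mreg v i) (fr!i)"
      using i hat_upt[OF i] v(3,4) img_simps(1) by (simp add: zig_comp_acc)
    moreover have "mreg h i = cId D (zr X (hat \<phi> i))"
      using i by (simp del: upt_Suc add: h_def less_Suc_eq_le[symmetric] img_r_def)
    ultimately have "cComp D (mreg v i) (fr!i) = cId D (zr X (hat \<phi> i))" using v(5) by simp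
    moreover have "cComp D (fr!i) (mreg v i) = cId D (zr Y i)"
      using arg_cong[OF wv, of "\<lambda>x. mreg x i"] i hat_upt[OF i] by (simp add: zig_comp_acc zig_id_acc w_def)
    ultimately show ?thesis
      using arrs(1)[OF i] av(4)[of i] i hat_upt[OF i] img_simps(1,2) unfolding iso_def arr_def
      by (auto simp: img_r_def)
  qed
  show "iso D (fsg!j)" if j: "j < n"
  proof -
    have k: "\<phi>!j < m" using \<phi>(3)[OF j] .
    have "cComp D (msing v (\<phi>!j)) (fsg!j) = cId D (zs X j)"
      using arg_cong[OF v(5), of "\<lambda>x. msing x j"] j \<phi>(1) by (simp add: zig_comp_acc h_def)
    moreover have "cComp D (fsg!j) (msing v (\<phi>!j)) = cId D (zs Y (\<phi>!j))"
      using arg_cong[OF wv, of "\<lambda>x. msing x (\<phi>!j)"] k w_s_at_\<phi>[OF j] v(4)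
      by (simp add: zig_comp_acc zig_id_acc w_def)
    ultimately show ?thesis
      using arrs(2)[OF j] av(5)[OF k] k img_simps(3)[OF k] img_at_\<phi>(3)[OF j] unfolding iso_def arr_def
      by auto
  qed
qed

end

lemma simple_deg_slices_iso:
  assumes cat: "is_category D" and s: "simple_deg D f"
  shows "\<forall>i \<le> zlen (mcod f). iso D (mreg f i)" "\<forall>j < zlen (mdom f). iso D (msing f j)"
proof -
  obtain X Y \<phi> fr fsg where F: "f = ZM X Y \<phi> fr fsg"
    using s unfolding simple_deg_def by (auto elim: zig_mapE)
  interpret simple_degeneracy D X Y \<phi> fr fsg using cat s F by unfold_locales simp_all
  show "\<forall>i \<le> zlen (mcod f). iso D (mreg f i)" "\<forall>j < zlen (mdom f). iso D (msing f j)"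
    using slices_iso F by auto
qed

lemma deg_comp:
  assumes cat: "is_category C" and f: "deg C n f" and g: "deg C n g"
    and fg: "cDom (Zn C n) g = cCod (Zn C n) f"
  shows "deg C n (cComp (Zn C n) g f)"
proof (cases n)
  case 0 thus ?thesis using iso_comp[OF lift_category[OF cat]] f g fg by simp
next
  case (Suc m)
  thus ?thesis using comp_closure.comp[of "Z (Zn C m)" _ f g] f g fg by simp
qed

lemma deg_Suc_if_parallel: "parallel_deg (Zn C m) (deg C m) f \<Longrightarrow> deg C (Suc m) f"
  by (simp add: comp_closure.gen parallel_deg_def)

lemma deg_Suc_slices:
  assumes cat: "is_category C" and iso_deg: "\<And>f. iso (Zn C m) f \<Longrightarrow> deg C m f"
    and d: "deg C (Suc m) d"
  shows "zig_map (Zn C m) d \<and> sorted_wrt (<) (msing_map d) \<and>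
    (\<forall>i \<le> zlen (mcod d). deg C m (mreg d i)) \<and> (\<forall>j < zlen (mdom d). deg C m (msing d j))"
proof -
  let ?D = "Zn C m"
  have catD: "is_category ?D" by (rule Zn_category[OF cat])
  have "comp_closure (Z ?D) (\<lambda>g. simple_deg ?D g \<or> parallel_deg ?D (deg C m) g) d" using d by simp
  thus ?thesis
  proof (induction rule: comp_closure.induct)
    case (gen f)
    thus ?case using simple_deg_slices_iso[OF catD] iso_deg
      unfolding simple_deg_def parallel_deg_def pi_vertical_def delta_mono_def
      by (auto simp: sorted_wrt_iff_nth_less)
  next
    case (comp f g)
    have fZ: "zig_map ?D f" and gZ: "zig_map ?D g" and fg: "mdom g = mcod f" using comp by auto
    note af = zig_map_acc[OF fZ] and ag = zig_map_acc[OF gZ]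
    note lf = zig_map_lengths[OF fZ] and lg = zig_map_lengths[OF gZ]
    have "sorted_wrt (<) (msing_map (zig_comp ?D g f))"
      using comp lf lg fg by (auto simp: zig_comp_acc sorted_wrt_iff_nth_less)
    moreover have "deg C m (mreg (zig_comp ?D g f) i)" if i: "i \<le> zlen (mcod g)" for i
    proof -
      have h: "hat (msing_map g) i \<le> zlen (mcod f)" using hat_le[of "msing_map g" i] lg fg by simp
      show ?thesis unfolding zig_comp_acc(4)[OF i]
        using comp.IH i h ag(4)[OF i] af(4)[OF h] fg by (intro deg_comp[OF cat]) (auto simp: arr_def)
    qed
    moreover have "deg C m (msing (zig_comp ?D g f) j)" if j: "j < zlen (mdom f)" for j
    proof -
      have h: "msing_map f ! j < zlen (mdom g)" using lf(3)[OF j] fg by simp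
      show ?thesis unfolding zig_comp_acc(5)[OF j[folded lf(1)]]
        using comp.IH j h ag(5)[OF h] af(5)[OF j] fg by (intro deg_comp[OF cat]) (auto simp: arr_def)
    qed
    ultimately show ?case using zig_comp_closed[OF catD fZ gZ] fg by (simp add: zig_comp_acc)
  qed
qed

lemma zig_map_monic:
  assumes cat: "is_category D" and dZ: "zig_map D d" and strict: "sorted_wrt (<) (msing_map d)"
    and mon_r: "\<And>i. i \<le> zlen (mcod d) \<Longrightarrow> monic D (mreg d i)"
    and mon_s: "\<And>j. j < zlen (mdom d) \<Longrightarrow> monic D (msing d j)"
  shows "monic (Z D) d"
  unfolding monic_def Z_simps mem_Collect_eq
proof (intro conjI allI impI dZ)
  fix a b assume aZ: "zig_map D a" and bZ: "zig_map D b" and ca: "mcod a = mdom d"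
    and cb: "mcod b = mdom d" and ab: "mdom a = mdom b" and e: "zig_comp D d a = zig_comp D d b"
  note ad = zig_map_acc[OF dZ] and aa = zig_map_acc[OF aZ] and ab' = zig_map_acc[OF bZ]
  note la = zig_map_lengths[OF aZ] and lb = zig_map_lengths[OF bZ] and ld = zig_map_lengths[OF dZ]
  have ss: "msing_map a = msing_map b"
  proof (rule nth_equalityI)
    show "length (msing_map a) = length (msing_map b)" using la lb ab by simp
    fix j assume j: "j < length (msing_map a)"
    have "msing_map d ! (msing_map a ! j) = msing_map d ! (msing_map b ! j)"
      using arg_cong[OF e, of "\<lambda>x. msing_map x ! j"] j la lb ab by (simp add: zig_comp_acc)
    thus "msing_map a ! j = msing_map b ! j"
      using sorted_wrt_less_inj[OF strict] la(1,3) lb(3) ld(1) j ab ca cb by simp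
  qed
  show "a = b"
  proof (rule zig_eqI[OF aZ bZ ab _ ss])
    show "mcod a = mcod b" using ca cb by simp
  next
    fix j assume j: "j < zlen (mdom a)"
    let ?k = "msing_map a ! j"
    have k: "?k < zlen (mdom d)" using la(3)[OF j] ca by simp
    have "cComp D (msing d ?k) (msing a j) = cComp D (msing d ?k) (msing b j)"
      using arg_cong[OF e, of "\<lambda>x. msing x j"] j la lb ss by (simp add: zig_comp_acc)
    thus "msing a j = msing b j"
      using monic_cancel[OF mon_s[OF k]] aa(5)[OF j] ab'(5)[of j] j ca cb ab ss ad(5)[OF k]
      by (simp add: arr_def)
  next
    fix q assume q: "q \<le> zlen (mcod a)"
    obtain i where i: "i \<le> zlen (mcod d)" "hat (msing_map d) i = q"
      using hat_surj[OF strict _, of "zlen (mcod d)" q] ld q ca by auto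
    have "cComp D (mreg d i) (mreg a q) = cComp D (mreg d i) (mreg b q)"
      using arg_cong[OF e, of "\<lambda>x. mreg x i"] i by (simp add: zig_comp_acc)
    thus "mreg a q = mreg b q"
      using monic_cancel[OF mon_r[OF i(1)]] aa(4)[OF q] ab'(4)[of q] q ca cb ab ss ad(4)[OF i(1)] i(2)
      by (simp add: arr_def)
  qed
qed

lemma delta_maps_inverse_upt:
  assumes f: "delta_map fs n m" and g: "delta_map gs m n"
    and gf: "map (\<lambda>j. gs!(fs!j)) [0..<n] = [0..<n]" and fg: "map (\<lambda>k. fs!(gs!k)) [0..<m] = [0..<m]"
  shows "n = m \<and> fs = [0..<n] \<and> gs = [0..<n]"
proof -
  have lf: "length fs = n" "sorted fs" "\<forall>j<n. fs!j < m" using f unfolding delta_map_def by auto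
  have lg: "length gs = m" "\<forall>j<m. gs!j < n" using g unfolding delta_map_def by auto
  have gf': "gs!(fs!j) = j" if "j < n" for j using arg_cong[OF gf, of "\<lambda>l. l!j"] that by simp
  have fg': "fs!(gs!k) = k" if "k < m" for k using arg_cong[OF fg, of "\<lambda>l. l!k"] that by simp
  have "distinct fs" unfolding distinct_conv_nth using gf' lf(1) by metis
  moreover have "set fs = {0..<m}"
  proof
    show "set fs \<subseteq> {0..<m}" using lf by (auto simp: in_set_conv_nth)
    show "{0..<m} \<subseteq> set fs" using fg' lg lf(1) by (metis atLeastLessThan_iff nth_mem subsetI)
  qed
  ultimately have e: "fs = [0..<m]" using sorted_distinct_set_unique[OF lf(2)] by simp
  hence "n = m" using lf by simp
  moreover have "gs = [0..<m]" using fg' e lg \<open>n = m\<close> by (intro nth_equalityI) auto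
  ultimately show ?thesis using e by simp
qed

lemma iso_Z_inverse:
  assumes f: "iso (Z D) f"
  obtains g where "zig_map D f" "zig_map D g" "mdom g = mcod f" "mcod g = mdom f"
    "zig_comp D g f = zig_id D (mdom f)" "zig_comp D f g = zig_id D (mcod f)"
    "zlen (mcod f) = zlen (mdom f)" "msing_map f = [0..<zlen (mdom f)]"
    "msing_map g = [0..<zlen (mdom f)]"
proof -
  obtain g where g: "arr (Z D) g (mcod f) (mdom f)" "zig_comp D g f = zig_id D (mdom f)"
    "zig_comp D f g = zig_id D (mcod f)"
    using f by (elim iso_invE) simp
  have fZ: "zig_map D f" using iso_arr[OF f] by simp
  have gZ: "zig_map D g" "mdom g = mcod f" "mcod g = mdom f" using g(1) by (auto simp: arr_def)
  have df: "delta_map (msing_map f) (zlen (mdom f)) (zlen (mcod f))" using zig_map_acc(3)[OF fZ] .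
  have dg: "delta_map (msing_map g) (zlen (mcod f)) (zlen (mdom f))" using zig_map_acc(3)[OF gZ(1)] gZ by simp
  have "map (\<lambda>j. msing_map g ! (msing_map f ! j)) [0..<zlen (mdom f)] = [0..<zlen (mdom f)]"
    using arg_cong[OF g(2), of msing_map] zig_map_lengths(1)[OF fZ] by (simp add: zig_comp_acc zig_id_acc)
  moreover have "map (\<lambda>k. msing_map f ! (msing_map g ! k)) [0..<zlen (mcod f)] = [0..<zlen (mcod f)]"
    using arg_cong[OF g(3), of msing_map] zig_map_lengths(1)[OF gZ(1)] gZ
    by (simp add: zig_comp_acc zig_id_acc)
  ultimately show ?thesis using that[OF fZ gZ g(2,3)] delta_maps_inverse_upt[OF df dg] by auto
qed

lemma iso_Z_slices:
  assumes f: "iso (Z D) f"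
  shows "pi_vertical f" "\<forall>i \<le> zlen (mcod f). iso D (mreg f i)" "\<forall>j < zlen (mdom f). iso D (msing f j)"
proof -
  obtain g where g: "zig_map D f" "zig_map D g" "mdom g = mcod f" "mcod g = mdom f"
    "zig_comp D g f = zig_id D (mdom f)" "zig_comp D f g = zig_id D (mcod f)"
    "zlen (mcod f) = zlen (mdom f)" "msing_map f = [0..<zlen (mdom f)]"
    "msing_map g = [0..<zlen (mdom f)]"
    using f by (rule iso_Z_inverse)
  note af = zig_map_acc[OF g(1)] and ag = zig_map_acc[OF g(2)]
  show "pi_vertical f" unfolding pi_vertical_def using g(7,8) by simp
  show "\<forall>i \<le> zlen (mcod f). iso D (mreg f i)"
  proof (intro allI impI)
    fix i assume i: "i \<le> zlen (mcod f)"
    have h: "hat (msing_map f) i = i" "hat (msing_map g) i = i" using g(7-9) hat_upt i by auto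
    have "cComp D (mreg g i) (mreg f i) = cId D (zr (mdom f) i)"
      "cComp D (mreg f i) (mreg g i) = cId D (zr (mcod f) i)"
      using arg_cong[OF g(5), of "\<lambda>x. mreg x i"] arg_cong[OF g(6), of "\<lambda>x. mreg x i"] i h g(3,4,7)
      by (simp_all add: zig_comp_acc zig_id_acc)
    thus "iso D (mreg f i)" using af(4)[OF i] ag(4)[of i] i h g(3,4,7) unfolding iso_def arr_def by auto
  qed
  show "\<forall>j < zlen (mdom f). iso D (msing f j)"
  proof (intro allI impI)
    fix j assume j: "j < zlen (mdom f)"
    have h: "msing_map f ! j = j" "msing_map g ! j = j" using g(8,9) j by auto
    have "cComp D (msing g j) (msing f j) = cId D (zs (mdom f) j)"
      "cComp D (msing f j) (msing g j) = cId D (zs (mcod f) j)"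
      using arg_cong[OF g(5), of "\<lambda>x. msing x j"] arg_cong[OF g(6), of "\<lambda>x. msing x j"] j h g(7-9)
      by (simp_all add: zig_comp_acc zig_id_acc)
    thus "iso D (msing f j)" using af(5)[OF j] ag(5)[of j] j h g(3,4,7) unfolding iso_def arr_def by auto
  qed
qed

lemma deg_monic_and_iso_deg:
  assumes cat: "is_category C"
  shows "(\<forall>d. deg C n d \<longrightarrow> d \<in> cArr (Zn C n) \<and> monic (Zn C n) d) \<and> (\<forall>f. iso (Zn C n) f \<longrightarrow> deg C n f)"
proof (induction n)
  case 0
  show ?case using iso_monic[OF lift_category[OF cat]] iso_arr by auto
next
  case (Suc m)
  have catD: "is_category (Zn C m)" by (rule Zn_category[OF cat])
  have "monic (Zn C (Suc m)) d" if "deg C (Suc m) d" for d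
    using deg_Suc_slices[OF cat _ that] Suc.IH zig_map_monic[OF catD] by simp
  moreover have "deg C (Suc m) f" if "iso (Zn C (Suc m)) f" for f
    using iso_Z_slices[of "Zn C m" f] iso_arr[OF that] that Suc.IH
    by (intro deg_Suc_if_parallel) (auto simp: parallel_deg_def)
  ultimately show ?case by (simp add: monic_def)
qed

lemma deg_monic: "is_category C \<Longrightarrow> deg C n d \<Longrightarrow> d \<in> cArr (Zn C n) \<and> monic (Zn C n) d"
  using deg_monic_and_iso_deg by blast

lemma iso_deg: "is_category C \<Longrightarrow> iso (Zn C n) f \<Longrightarrow> deg C n f"
  using deg_monic_and_iso_deg by blast

section \<open>Factorisation through vertical maps\<close>

definition vertical_map ::
  "(('o, 'm) zo, ('o, 'm) zm) cat \<Rightarrow> ('o, 'm) zo \<Rightarrow> (nat \<Rightarrow> ('o, 'm) zm) \<Rightarrow> (nat \<Rightarrow> ('o, 'm) zm) \<Rightarrow>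
   (nat \<Rightarrow> ('o, 'm) zm) \<Rightarrow> (nat \<Rightarrow> ('o, 'm) zm) \<Rightarrow> ('o, 'm) zm" where
  "vertical_map D X R S NX NY =
     ZM (ZZ (map (\<lambda>i. cDom D (R i)) [0..<Suc (zlen X)]) (map (\<lambda>k. cDom D (S k)) [0..<zlen X])
            (map NX [0..<zlen X]) (map NY [0..<zlen X]))
        X [0..<zlen X] (map R [0..<Suc (zlen X)]) (map S [0..<zlen X])"

lemma vertical_map_acc:
  fixes D X R S NX NY P defines "P \<equiv> vertical_map D X R S NX NY"
  shows "mcod P = X" "msing_map P = [0..<zlen X]" "zlen (mdom P) = zlen X"
    "\<And>i. i \<le> zlen X \<Longrightarrow> mreg P i = R i" "\<And>k. k < zlen X \<Longrightarrow> msing P k = S k"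
    "\<And>i. i \<le> zlen X \<Longrightarrow> zr (mdom P) i = cDom D (R i)"
    "\<And>k. k < zlen X \<Longrightarrow> zs (mdom P) k = cDom D (S k)"
    "\<And>k. k < zlen X \<Longrightarrow> zx (mdom P) k = NX k" "\<And>k. k < zlen X \<Longrightarrow> zy (mdom P) k = NY k"
  unfolding P_def vertical_map_def by (simp_all del: upt_Suc add: less_Suc_eq_le[symmetric])

lemma vertical_map_zig_map:
  assumes catD: "is_category D" and oX: "zig_obj D X"
    and R: "\<And>i. i \<le> zlen X \<Longrightarrow> R i \<in> cArr D \<and> cCod D (R i) = zr X i"
    and S: "\<And>k. k < zlen X \<Longrightarrow> S k \<in> cArr D \<and> cCod D (S k) = zs X k"
    and NX: "\<And>k. k < zlen X \<Longrightarrow>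
      arr D (NX k) (cDom D (R k)) (cDom D (S k)) \<and> cComp D (S k) (NX k) = cComp D (zx X k) (R k)"
    and NY: "\<And>k. k < zlen X \<Longrightarrow>
      arr D (NY k) (cDom D (R (Suc k))) (cDom D (S k)) \<and> cComp D (S k) (NY k) = cComp D (zy X k) (R (Suc k))"
  shows "zig_map D (vertical_map D X R S NX NY)"
proof -
  let ?L = "zlen X" and ?N = "mdom (vertical_map D X R S NX NY)"
  note acc = vertical_map_acc[where D=D and X=X and R=R and S=S and NX=NX and NY=NY]
  have "cDom D (R i) \<in> cObj D" if "i \<le> ?L" for i using R[OF that] catD unfolding is_category_def by blast
  moreover have "cDom D (S k) \<in> cObj D" if "k < ?L" for k using S[OF that] catD unfolding is_category_def by blast
  ultimately have oN: "zig_obj D ?N" unfolding zig_obj_def vertical_map_def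
    using NX NY unfolding arr_def
    by (auto simp del: upt_Suc simp: nth_append less_Suc_eq_le[symmetric] set_conv_nth)
  have "zm_typed D ?N X [0..<?L] (map R [0..<Suc ?L]) (map S [0..<?L])"
    unfolding zm_typed_def using oN oX acc(3,6,7) R S hat_upt
    by (auto simp del: upt_Suc simp: delta_map_def arr_def less_Suc_eq_le[symmetric])
  moreover have "zm_commutes D ?N X [0..<?L] (map R [0..<Suc ?L]) (map S [0..<?L])"
    unfolding zm_commutes_def acc(3) using NX NY acc(8,9)
    by (auto simp del: upt_Suc simp: less_Suc_eq_le[symmetric])
  ultimately show ?thesis unfolding vertical_map_def using zig_mapI by simp
qed

text \<open>A map \<open>f\<close> into \<open>X\<close> factors through a vertical map \<open>P\<close> with monic singular slices as soon
  as its slices factor through those of \<open>P\<close>: monicity makes the factors \<open>t\<close>, \<open>u\<close> commute with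
  the legs of the domain of \<open>P\<close>.\<close>

locale vertical_factorisation =
  fixes D :: "(('o, 'm) zo, ('o, 'm) zm) cat" and P f :: "('o, 'm) zm" and t u :: "nat \<Rightarrow> ('o, 'm) zm"
  assumes catD: "is_category D"
    and P: "zig_map D P" "pi_vertical P"
    and mon: "\<And>k. k < zlen (mcod P) \<Longrightarrow> monic D (msing P k)"
    and f: "zig_map D f" "mcod f = mcod P"
    and t: "\<And>i. i \<le> zlen (mcod P) \<Longrightarrow>
      arr D (t i) (zr (mdom f) (hat (msing_map f) i)) (zr (mdom P) i) \<and> cComp D (mreg P i) (t i) = mreg f i"
    and u: "\<And>p. p < zlen (mdom f) \<Longrightarrow>
      arr D (u p) (zs (mdom f) p) (zs (mdom P) (msing_map f ! p)) \<and>
      cComp D (msing P (msing_map f ! p)) (u p) = msing f p"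
begin

abbreviation "X \<equiv> mcod P"
abbreviation "N \<equiv> mdom P"
abbreviation "A \<equiv> mdom f"
abbreviation "\<phi> \<equiv> msing_map f"
abbreviation "L \<equiv> zlen X"
abbreviation "n \<equiv> zlen A"

lemma vertical: "zlen N = L" "msing_map P = [0..<L]"
  using P(2) unfolding pi_vertical_def by auto

lemma P_arrs: "\<And>i. i \<le> L \<Longrightarrow> arr D (mreg P i) (zr N i) (zr X i)"
  "\<And>k. k < L \<Longrightarrow> arr D (msing P k) (zs N k) (zs X k)"
  using zig_map_acc(4,5)[OF P(1)] vertical hat_upt by auto

lemma \<phi>: "length \<phi> = n" "sorted \<phi>" "\<And>p. p < n \<Longrightarrow> \<phi>!p < L"
  using zig_map_lengths[OF f(1)] f(2) by auto

lemma legs: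
  "\<And>p. p < n \<Longrightarrow> arr D (zx A p) (zr A p) (zs A p)"
  "\<And>p. p < n \<Longrightarrow> arr D (zy A p) (zr A (Suc p)) (zs A p)"
  "\<And>k. k < L \<Longrightarrow> arr D (zx N k) (zr N k) (zs N k)"
  "\<And>k. k < L \<Longrightarrow> arr D (zy N k) (zr N (Suc k)) (zs N k)"
  "\<And>k. k < L \<Longrightarrow> arr D (zx X k) (zr X k) (zs X k)"
  "\<And>k. k < L \<Longrightarrow> arr D (zy X k) (zr X (Suc k)) (zs X k)"
  using zig_obj_arr(3,4)[OF zig_map_acc(1)[OF f(1)]] zig_obj_arr(3,4)[OF zig_map_acc(1)[OF P(1)]]
    zig_obj_arr(3,4)[OF zig_map_acc(2)[OF P(1)]] vertical by auto

lemma P_squares: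
  assumes k: "k < L"
  shows "cComp D (msing P k) (zx N k) = cComp D (zx X k) (mreg P k)"
    "cComp D (msing P k) (zy N k) = cComp D (zy X k) (mreg P (Suc k))"
proof -
  show "cComp D (msing P k) (zx N k) = cComp D (zx X k) (mreg P k)"
    using zig_map_squares(1)[OF P(1), of k] vertical k by (cases k) auto
  show "cComp D (msing P k) (zy N k) = cComp D (zy X k) (mreg P (Suc k))"
    using zig_map_squares(2)[OF P(1), of k] vertical k by (cases "Suc k = L") auto
qed

lemma through_u:
  assumes p: "p < n" and a: "arr D a x (zs A p)"
  shows "cComp D (msing P (\<phi>!p)) (cComp D (u p) a) = cComp D (msing f p) a"
  using cat_assoc[OF catD a _ P_arrs(2)[OF \<phi>(3)[OF p]]] u[OF p] by simp

lemma through_x_leg: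
  assumes k: "k < L"
  shows "cComp D (msing P k) (cComp D (zx N k) (t k)) = cComp D (zx X k) (mreg f k)"
proof -
  have t': "arr D (t k) (zr A (hat \<phi> k)) (zr N k)" "cComp D (mreg P k) (t k) = mreg f k"
    using t k by auto
  have "cComp D (msing P k) (cComp D (zx N k) (t k)) = cComp D (cComp D (msing P k) (zx N k)) (t k)"
    using cat_assoc[OF catD t'(1) legs(3)[OF k] P_arrs(2)[OF k]] .
  also have "\<dots> = cComp D (zx X k) (cComp D (mreg P k) (t k))"
    using P_squares(1)[OF k] cat_assoc[OF catD t'(1) P_arrs(1) legs(5)[OF k]] k by simp
  finally show ?thesis using t'(2) by simp
qed

lemma through_y_leg:
  assumes k: "k < L"
  shows "cComp D (msing P k) (cComp D (zy N k) (t (Suc k))) = cComp D (zy X k) (mreg f (Suc k))"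
proof -
  have t': "arr D (t (Suc k)) (zr A (hat \<phi> (Suc k))) (zr N (Suc k))"
    "cComp D (mreg P (Suc k)) (t (Suc k)) = mreg f (Suc k)"
    using t k by auto
  have "cComp D (msing P k) (cComp D (zy N k) (t (Suc k))) =
      cComp D (cComp D (msing P k) (zy N k)) (t (Suc k))"
    using cat_assoc[OF catD t'(1) legs(4)[OF k] P_arrs(2)[OF k]] .
  also have "\<dots> = cComp D (zy X k) (cComp D (mreg P (Suc k)) (t (Suc k)))"
    using P_squares(2)[OF k] cat_assoc[OF catD t'(1) P_arrs(1) legs(6)[OF k]] k by simp
  finally show ?thesis using t'(2) by simp
qed

lemma cancel:
  assumes "k < L" "arr D a x (zs N k)" "arr D b x (zs N k)"
    "cComp D (msing P k) a = cComp D (msing P k) b"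
  shows "a = b"
  using monic_cancel[OF mon] P_arrs(2) assms by (simp add: arr_def)

definition "g = ZM A N \<phi> (map t [0..<Suc L]) (map u [0..<n])"

lemma g_commutes: "zm_commutes D A N \<phi> (map t [0..<Suc L]) (map u [0..<n])"
  unfolding zm_commutes_def vertical(1)
proof (intro conjI allI impI)
  fix p assume p: "p < n" and c: "p = 0 \<or> \<phi>!(p-1) < \<phi>!p"
  have k: "\<phi>!p < L" using \<phi>(3)[OF p] .
  have "hat \<phi> (\<phi>!p) = p" using hat_at_fiber_start[OF \<phi>(2)] p c \<phi>(1) by simp
  hence "cComp D (u p) (zx A p) = cComp D (zx N (\<phi>!p)) (t (\<phi>!p))"
    using cancel[OF k] cat_comp[OF catD legs(1)[OF p]] u[OF p] cat_comp[OF catD _ legs(3)[OF k]] t[of "\<phi>!p"] k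
      through_u[OF p legs(1)[OF p]] through_x_leg[OF k] zig_map_squares(1)[OF f(1) _ c] p f(2)
    by (auto simp: arr_def)
  thus "cComp D (map u [0..<n] ! p) (zx A p) = cComp D (zx N (\<phi>!p)) (map t [0..<Suc L] ! (\<phi>!p))"
    using p k by (simp del: upt_Suc add: less_Suc_eq_le[symmetric])
next
  fix p assume p: "p < n" and c: "Suc p = n \<or> \<phi>!p < \<phi>!Suc p"
  have k: "\<phi>!p < L" using \<phi>(3)[OF p] .
  have "hat \<phi> (Suc (\<phi>!p)) = Suc p" using hat_Suc_at_fiber_end[OF \<phi>(2)] p c \<phi>(1) by simp
  hence "cComp D (u p) (zy A p) = cComp D (zy N (\<phi>!p)) (t (Suc (\<phi>!p)))"
    using cancel[OF k] cat_comp[OF catD legs(2)[OF p]] u[OF p] cat_comp[OF catD _ legs(4)[OF k]]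
      t[of "Suc (\<phi>!p)"] k
      through_u[OF p legs(2)[OF p]] through_y_leg[OF k] zig_map_squares(2)[OF f(1) _ c] p f(2)
    by (auto simp: arr_def)
  thus "cComp D (map u [0..<n] ! p) (zy A p) = cComp D (zy N (\<phi>!p)) (map t [0..<Suc L] ! Suc (\<phi>!p))"
    using p k by (simp del: upt_Suc add: less_Suc_eq_le[symmetric])
next
  fix p assume "Suc p < n \<and> \<phi>!p = \<phi>!Suc p"
  hence p: "p < n" "Suc p < n" and c: "\<phi>!p = \<phi>!Suc p" by auto
  have k: "\<phi>!p < L" using \<phi>(3)[OF p(1)] .
  have "cComp D (u p) (zy A p) = cComp D (u (Suc p)) (zx A (Suc p))"
    using cancel[OF k] cat_comp[OF catD legs(2)[OF p(1)]] u[OF p(1)] cat_comp[OF catD legs(1)[OF p(2)]]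
      u[OF p(2)] through_u[OF p(1) legs(2)[OF p(1)]] through_u[OF p(2) legs(1)[OF p(2)]]
      zig_map_squares(3)[OF f(1) p(2) c] c
    by (auto simp: arr_def)
  thus "cComp D (map u [0..<n] ! p) (zy A p) = cComp D (map u [0..<n] ! Suc p) (zx A (Suc p))"
    using p by simp
next
  fix i assume i: "i < L" and ni: "i \<notin> set \<phi>"
  have "cComp D (zx N i) (t i) = cComp D (zy N i) (t (Suc i))"
    using cancel[OF i] cat_comp[OF catD _ legs(3)[OF i]] cat_comp[OF catD _ legs(4)[OF i]] t[of i] t[of "Suc i"]
      hat_not_in[OF ni] i through_x_leg[OF i] through_y_leg[OF i] zig_map_squares(4)[OF f(1)] ni f(2)
    by (auto simp: arr_def)
  thus "cComp D (zx N i) (map t [0..<Suc L] ! i) = cComp D (zy N i) (map t [0..<Suc L] ! Suc i)"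
    using i by (simp del: upt_Suc add: less_Suc_eq_le[symmetric])
qed

lemma g_map: "zig_map D g"
  unfolding g_def
proof (rule zig_mapI[OF _ g_commutes])
  show "zm_typed D A N \<phi> (map t [0..<Suc L]) (map u [0..<n])"
    unfolding zm_typed_def using zig_map_acc(1,3)[OF f(1)] zig_map_acc(1)[OF P(1)] f(2) vertical t u
    by (auto simp del: upt_Suc simp: less_Suc_eq_le[symmetric])
qed

lemma P_comp_g: "zig_comp D P g = f"
proof (rule zig_eqI[OF _ f(1)])
  show "zig_map D (zig_comp D P g)" using zig_comp_closed[OF catD g_map P(1)] by (simp add: g_def)
  show "msing_map (zig_comp D P g) = \<phi>"
    using \<phi> vertical by (auto simp: zig_comp_acc g_def intro: nth_equalityI)
  fix i assume "i \<le> zlen (mcod (zig_comp D P g))"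
  hence i: "i \<le> L" by (simp add: zig_comp_acc)
  show "mreg (zig_comp D P g) i = mreg f i"
    using i t[OF i] hat_upt[OF i] vertical
    by (simp del: upt_Suc add: zig_comp_acc g_def less_Suc_eq_le[symmetric])
next
  fix p assume "p < zlen (mdom (zig_comp D P g))"
  hence p: "p < n" by (simp add: zig_comp_acc g_def)
  show "msing (zig_comp D P g) p = msing f p" using p u[OF p] \<phi> by (simp add: zig_comp_acc g_def)
qed (simp_all add: zig_comp_acc g_def f(2))

end

lemma factors_through_vertical:
  assumes catD: "is_category D" and P: "zig_map D P" "pi_vertical P"
    and mon: "\<And>k. k < zlen (mcod P) \<Longrightarrow> monic D (msing P k)"
    and f: "zig_map D f" "mcod f = mcod P"
    and t: "\<And>i. i \<le> zlen (mcod P) \<Longrightarrow> \<exists>t. arr D t (zr (mdom f) (hat (msing_map f) i)) (cDom D (mreg P i)) \<and>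
      cComp D (mreg P i) t = mreg f i"
    and u: "\<And>p. p < zlen (mdom f) \<Longrightarrow> \<exists>u. arr D u (zs (mdom f) p) (cDom D (msing P (msing_map f ! p))) \<and>
      cComp D (msing P (msing_map f ! p)) u = msing f p"
  shows "factors_through (Z D) f P"
proof -
  obtain t' where t': "\<And>i. i \<le> zlen (mcod P) \<Longrightarrow> arr D (t' i) (zr (mdom f) (hat (msing_map f) i))
      (cDom D (mreg P i)) \<and> cComp D (mreg P i) (t' i) = mreg f i"
    using t by metis
  obtain u' where u': "\<And>p. p < zlen (mdom f) \<Longrightarrow> arr D (u' p) (zs (mdom f) p)
      (cDom D (msing P (msing_map f ! p))) \<and> cComp D (msing P (msing_map f ! p)) (u' p) = msing f p"
    using u by metis
  have vP: "zlen (mdom P) = zlen (mcod P)" "msing_map P = [0..<zlen (mcod P)]"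
    using P(2) unfolding pi_vertical_def by auto
  interpret vertical_factorisation D P f t' u'
  proof
    show "\<And>i. i \<le> zlen (mcod P) \<Longrightarrow> arr D (t' i) (zr (mdom f) (hat (msing_map f) i)) (zr (mdom P) i) \<and>
      cComp D (mreg P i) (t' i) = mreg f i"
      using t' zig_map_acc(4)[OF P(1)] vP hat_upt by (auto simp: arr_def)
    show "\<And>p. p < zlen (mdom f) \<Longrightarrow> arr D (u' p) (zs (mdom f) p) (zs (mdom P) (msing_map f ! p)) \<and>
      cComp D (msing P (msing_map f ! p)) (u' p) = msing f p"
      using u' zig_map_acc(5)[OF P(1)] zig_map_lengths(3)[OF f(1)] f(2) vP by (auto simp: arr_def)
  qed (use assms in auto)
  show ?thesis unfolding factors_through_def using g_map P_comp_g by (auto simp: g_def)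
qed

section \<open>Normalising maps\<close>

lemma normalising_iso_comp:
  assumes cat: "is_category C" and i: "iso (Zn C l) i" and d: "normalising C l d"
    and id: "cDom (Zn C l) i = cCod (Zn C l) d"
  shows "normalising C l (cComp (Zn C l) i d)"
  unfolding normalising_def
proof (intro conjI allI impI)
  let ?D = "Zn C l"
  have catD: "is_category ?D" by (rule Zn_category[OF cat])
  have dd: "deg C l d" using d unfolding normalising_def by simp
  have ad: "arr ?D d (cDom ?D d) (cCod ?D d)" and ai: "arr ?D i (cCod ?D d) (cCod ?D i)"
    using deg_monic[OF cat dd] iso_arr[OF i] id by (auto simp: arr_def)
  show "deg C l (cComp ?D i d)" using deg_comp[OF cat dd iso_deg[OF cat i] id] .
  fix d' assume d': "deg C l d' \<and> cCod ?D d' = cCod ?D (cComp ?D i d)"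
  obtain i' where i': "arr ?D i' (cCod ?D i) (cDom ?D i)" "cComp ?D i' i = cId ?D (cDom ?D i)"
    "cComp ?D i i' = cId ?D (cCod ?D i)"
    using i by (rule iso_invE)
  have d'A: "arr ?D d' (cDom ?D d') (cCod ?D i)"
    using deg_monic[OF cat conjunct1[OF d']] d' cat_comp[OF catD ad ai] by (auto simp: arr_def)
  have i'd': "arr ?D (cComp ?D i' d') (cDom ?D d') (cCod ?D d)" using cat_comp[OF catD d'A i'(1)] id by simp
  have "deg C l (cComp ?D i' d')"
    using deg_comp[OF cat conjunct1[OF d'] iso_deg[OF cat iso_inverse_iso[OF i' i]]] d'A i'(1)
    by (simp add: arr_def)
  then obtain t where t: "arr ?D t (cDom ?D d) (cDom ?D d')" "cComp ?D (cComp ?D i' d') t = d"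
    using d i'd' unfolding normalising_def factors_through_def by (auto simp: arr_def)
  have "cComp ?D i (cComp ?D i' d') = d'"
    using cat_assoc[OF catD d'A i'(1)] ai id i'(3) cat_idl[OF catD d'A] by (simp add: arr_def)
  hence "cComp ?D i d = cComp ?D d' t"
    using t cat_assoc[OF catD t(1) i'd' ai] by simp
  thus "factors_through ?D (cComp ?D i d) d'"
    unfolding factors_through_def using t(1) cat_comp[OF catD ad ai] by (auto simp: arr_def)
qed

lemma reg_normalising_globular_comp:
  assumes cat: "is_category C"
  shows "globular_map C l x \<Longrightarrow> reg_normalising C l d \<Longrightarrow> x \<in> cArr (Zn C l) \<Longrightarrow>
    d \<in> cArr (Zn C l) \<Longrightarrow> cDom (Zn C l) x = cCod (Zn C l) d \<Longrightarrow>
    reg_normalising C l (cComp (Zn C l) x d)"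
proof (induction l arbitrary: x d)
  case (Suc l)
  let ?D = "Zn C l"
  have xZ: "zig_map ?D x" and dZ: "zig_map ?D d" and xd: "mdom x = mcod d" using Suc.prems by auto
  note ax = zig_map_acc[OF xZ] and ad = zig_map_acc[OF dZ]
  note lx = zig_map_lengths[OF xZ] and ld = zig_map_lengths[OF dZ]
  show ?case unfolding Zn_Suc Z_simps reg_normalising.simps
  proof (intro conjI allI impI)
    fix i assume "i \<le> zlen (mcod (zig_comp ?D x d))"
    hence i: "i \<le> zlen (mcod x)" by (simp add: zig_comp_acc)
    have h: "hat (msing_map x) i \<le> zlen (mcod d)" using hat_le[of "msing_map x" i] lx xd by simp
    show "normalising C l (mreg (zig_comp ?D x d) i)" unfolding zig_comp_acc(4)[OF i]
      using normalising_iso_comp[OF cat] Suc.prems(1,2) i h ax(4)[OF i] ad(4)[OF h] xd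
      by (simp add: arr_def)
  next
    fix j assume "j < zlen (mdom (zig_comp ?D x d))"
    hence j: "j < zlen (mdom d)" by (simp add: zig_comp_acc)
    have k: "msing_map d ! j < zlen (mdom x)" using ld j xd by simp
    show "reg_normalising C l (msing (zig_comp ?D x d) j)" unfolding zig_comp_acc(5)[OF j[folded ld(1)]]
      using Suc.IH[of "msing x (msing_map d ! j)" "msing d j"] Suc.prems(1,2) j k ax(5)[OF k] ad(5)[OF j] xd
      by (simp add: arr_def)
  qed
qed simp

text \<open>Each of \<open>a\<close>, \<open>b\<close> factors through the other, and monicity makes the two factorisations
  mutually inverse.\<close>

lemma normalising_factor_iso:
  assumes cat: "is_category C" and a: "normalising C l a" and b: "normalising C l b"
    and ab: "cCod (Zn C l) a = cCod (Zn C l) b"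
    and t: "arr (Zn C l) t (cDom (Zn C l) a) (cDom (Zn C l) b)" "cComp (Zn C l) b t = a"
  shows "iso (Zn C l) t"
proof -
  let ?D = "Zn C l"
  have catD: "is_category ?D" by (rule Zn_category[OF cat])
  have da: "deg C l a" and db: "deg C l b" using a b unfolding normalising_def by auto
  have ma: "monic ?D a" and mb: "monic ?D b" using deg_monic[OF cat da] deg_monic[OF cat db] by auto
  have aa: "arr ?D a (cDom ?D a) (cCod ?D b)" and bb: "arr ?D b (cDom ?D b) (cCod ?D b)"
    using deg_monic[OF cat da] deg_monic[OF cat db] ab by (auto simp: arr_def)
  obtain s where s: "arr ?D s (cDom ?D b) (cDom ?D a)" "cComp ?D a s = b"
    using b da ab unfolding normalising_def factors_through_def arr_def by metis
  have "cComp ?D a (cComp ?D s t) = cComp ?D a (cId ?D (cDom ?D a))"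
    using cat_assoc[OF catD t(1) s(1) aa] s(2) t(2) cat_idr[OF catD aa] by simp
  hence st: "cComp ?D s t = cId ?D (cDom ?D a)"
    using monic_cancel[OF ma cat_comp[OF catD t(1) s(1)] cat_id[OF catD]] cat_arr_obj[OF catD aa] aa
    by (auto simp: arr_def)
  have "cComp ?D b (cComp ?D t s) = cComp ?D b (cId ?D (cDom ?D b))"
    using cat_assoc[OF catD s(1) t(1) bb] s(2) t(2) cat_idr[OF catD bb] by simp
  hence ts: "cComp ?D t s = cId ?D (cDom ?D b)"
    using monic_cancel[OF mb cat_comp[OF catD s(1) t(1)] cat_id[OF catD]] cat_arr_obj[OF catD bb] bb
    by (auto simp: arr_def)
  show ?thesis unfolding iso_def using t(1) s(1) st ts by (auto simp: arr_def)
qed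

section \<open>Relative normalisation of globular zigzags\<close>

definition reg_normalising_sink :: "('o, 'm) cat \<Rightarrow> nat \<Rightarrow> ('o, 'm) zo \<Rightarrow> ('o, 'm) zm set \<Rightarrow> bool" where
  "reg_normalising_sink C n X F \<longleftrightarrow>
     (\<forall>f\<in>F. f \<in> cArr (Zn C n) \<and> cCod (Zn C n) f = X \<and> reg_normalising C n f)"

definition globular_normalisation :: "('o, 'm) cat \<Rightarrow> nat \<Rightarrow> ('o, 'm) zm set \<Rightarrow> ('o, 'm) zm \<Rightarrow> bool" where
  "globular_normalisation C n F d \<longleftrightarrow>
     globular_obj C n (cDom (Zn C n) d) \<and> reg_normalising C n d \<and>
     (\<forall>f\<in>F. \<forall>g. g \<in> cArr (Zn C n) \<and> cDom (Zn C n) g = cDom (Zn C n) f \<and>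
        cCod (Zn C n) g = cDom (Zn C n) d \<and> cComp (Zn C n) d g = f \<longrightarrow> globular_map C n g)"

locale normalisation_step =
  fixes C :: "('o, 'm) cat" and m :: nat and X :: "('o, 'm) zo"
    and F :: "('o, 'm) zm set" and d :: "('o, 'm) zm"
  assumes cat: "is_category C"
    and IH: "\<And>Y G e. Y \<in> cObj (Zn C m) \<Longrightarrow> globular_obj C m Y \<Longrightarrow> reg_normalising_sink C m Y G \<Longrightarrow>
      rel_normalisation C m Y G (\<lambda>x. x) e \<Longrightarrow> globular_normalisation C m G e"
    and X: "X \<in> cObj (Zn C (Suc m))" "globular_obj C (Suc m) X"
    and F: "reg_normalising_sink C (Suc m) X F"
    and d: "rel_normalisation C (Suc m) X F (\<lambda>x. x) d"
begin

abbreviation "D \<equiv> Zn C m"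
abbreviation "N \<equiv> mdom d"
abbreviation "\<delta> \<equiv> msing_map d"
abbreviation "L \<equiv> zlen X"
abbreviation "K \<equiv> zlen N"

lemma catD: "is_category D"
  by (rule Zn_category[OF cat])

lemma X_zig_obj: "zig_obj D X"
  using X(1) by simp

lemma X_obj: "\<And>i. i \<le> L \<Longrightarrow> zr X i \<in> cObj D" "\<And>k. k < L \<Longrightarrow> zs X k \<in> cObj D"
  "\<And>k. k < L \<Longrightarrow> arr D (zx X k) (zr X k) (zs X k)" "\<And>k. k < L \<Longrightarrow> arr D (zy X k) (zr X (Suc k)) (zs X k)"
  using zig_obj_arr[OF X_zig_obj] by auto

lemma X_glob: "\<And>i. i \<le> L \<Longrightarrow> globular_obj C m (zr X i)"
  "\<And>k. k < L \<Longrightarrow> globular_obj C m (zs X k) \<and> globular_map C m (zx X k) \<and> globular_map C m (zy X k)"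
  using X(2) by auto

lemma F_maps:
  assumes "f \<in> F"
  shows "zig_map D f" "mcod f = X" "\<And>i. i \<le> L \<Longrightarrow> normalising C m (mreg f i)"
    "\<And>p. p < zlen (mdom f) \<Longrightarrow> reg_normalising C m (msing f p)"
  using F assms unfolding reg_normalising_sink_def by auto

lemma d_deg: "deg C (Suc m) d" and d_cod: "mcod d = X"
  and F_factor: "\<And>f. f \<in> F \<Longrightarrow> factors_through (Z D) f d"
  and d_least: "\<And>d'. deg C (Suc m) d' \<Longrightarrow> mcod d' = X \<Longrightarrow> (\<forall>f\<in>F. factors_through (Z D) f d') \<Longrightarrow>
    factors_through (Z D) d d'"
  using d unfolding rel_normalisation_def by auto

lemma d_map: "zig_map D d" and \<delta>_strict: "sorted_wrt (<) \<delta>"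
  and d_reg_deg: "\<And>i. i \<le> L \<Longrightarrow> deg C m (mreg d i)"
  and d_sing_deg: "\<And>j. j < K \<Longrightarrow> deg C m (msing d j)"
  using deg_Suc_slices[OF cat iso_deg[OF cat] d_deg] d_cod by auto

lemma \<delta>: "length \<delta> = K" "\<And>j. j < K \<Longrightarrow> \<delta>!j < L" "\<And>j. j < K \<Longrightarrow> hat \<delta> (\<delta>!j) = j"
  "\<And>j. j < K \<Longrightarrow> hat \<delta> (Suc (\<delta>!j)) = Suc j"
  using zig_map_lengths[OF d_map] d_cod hat_strict_at[OF \<delta>_strict] by auto

lemma d_arrs: "\<And>i. i \<le> L \<Longrightarrow> arr D (mreg d i) (zr N (hat \<delta> i)) (zr X i)"
  "\<And>j. j < K \<Longrightarrow> arr D (msing d j) (zs N j) (zs X (\<delta>!j))"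
  using zig_map_acc(4,5)[OF d_map] d_cod by auto

lemma N_legs: "\<And>j. j < K \<Longrightarrow> arr D (zx N j) (zr N j) (zs N j)"
  "\<And>j. j < K \<Longrightarrow> arr D (zy N j) (zr N (Suc j)) (zs N j)"
  using zig_obj_arr(3,4)[OF zig_map_acc(1)[OF d_map]] by auto

lemma d_squares:
  assumes j: "j < K"
  shows "cComp D (msing d j) (zx N j) = cComp D (zx X (\<delta>!j)) (mreg d (\<delta>!j))"
    "cComp D (msing d j) (zy N j) = cComp D (zy X (\<delta>!j)) (mreg d (Suc (\<delta>!j)))"
proof -
  show "cComp D (msing d j) (zx N j) = cComp D (zx X (\<delta>!j)) (mreg d (\<delta>!j))"
    using zig_map_squares(1)[OF d_map, of j] sorted_wrt_nth_less[OF \<delta>_strict, of "j-1" j] \<delta>(1) j d_cod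
    by (cases j) auto
  show "cComp D (msing d j) (zy N j) = cComp D (zy X (\<delta>!j)) (mreg d (Suc (\<delta>!j)))"
    using zig_map_squares(2)[OF d_map, of j] sorted_wrt_nth_less[OF \<delta>_strict, of j "Suc j"] \<delta>(1) j d_cod
    by (cases "Suc j = K") auto
qed

lemma F_factorisation:
  assumes f: "f \<in> F"
  obtains g where "zig_map D g" "mdom g = mdom f" "mcod g = N" "zig_comp D d g = f"
  using F_factor[OF f] unfolding factors_through_def by auto

lemma F_factorisation_slices:
  assumes g: "zig_map D g" "mcod g = N" "zig_comp D d g = f"
  shows "msing_map f = map (\<lambda>p. \<delta> ! (msing_map g ! p)) [0..<zlen (mdom g)]"
    "\<And>i. i \<le> L \<Longrightarrow> mreg f i = cComp D (mreg d i) (mreg g (hat \<delta> i))"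
    "\<And>p. p < zlen (mdom g) \<Longrightarrow> msing f p = cComp D (msing d (msing_map g ! p)) (msing g p)"
    "\<And>i. hat (msing_map f) i = hat (msing_map g) (hat \<delta> i)"
    "\<And>p. p < zlen (mdom g) \<Longrightarrow> msing_map g ! p < K"
proof -
  note lg = zig_map_lengths[OF g(1)] and ld = zig_map_lengths[OF d_map]
  show fs: "msing_map f = map (\<lambda>p. \<delta> ! (msing_map g ! p)) [0..<zlen (mdom g)]"
    using g(3) lg by (auto simp: zig_comp_acc)
  show "\<And>i. i \<le> L \<Longrightarrow> mreg f i = cComp D (mreg d i) (mreg g (hat \<delta> i))"
    using g(3) d_cod by (auto simp: zig_comp_acc)
  show "\<And>p. p < zlen (mdom g) \<Longrightarrow> msing f p = cComp D (msing d (msing_map g ! p)) (msing g p)"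
    using g(3) lg by (auto simp: zig_comp_acc)
  show "\<And>i. hat (msing_map f) i = hat (msing_map g) (hat \<delta> i)"
    unfolding fs lg(1)[symmetric] by (rule hat_comp[OF ld(2)]) (use lg ld g(2) in auto)
  show "\<And>p. p < zlen (mdom g) \<Longrightarrow> msing_map g ! p < K" using lg(3) g(2) by simp
qed

lemma d_factors_through_vertical:
  assumes R: "\<And>i. i \<le> L \<Longrightarrow> R i \<in> cArr D \<and> cCod D (R i) = zr X i"
    and S: "\<And>k. k < L \<Longrightarrow> S k \<in> cArr D \<and> cCod D (S k) = zs X k"
    and NX: "\<And>k. k < L \<Longrightarrow>
      arr D (NX k) (cDom D (R k)) (cDom D (S k)) \<and> cComp D (S k) (NX k) = cComp D (zx X k) (R k)"
    and NY: "\<And>k. k < L \<Longrightarrow>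
      arr D (NY k) (cDom D (R (Suc k))) (cDom D (S k)) \<and> cComp D (S k) (NY k) = cComp D (zy X k) (R (Suc k))"
    and deg_R: "\<And>i. i \<le> L \<Longrightarrow> deg C m (R i)" and deg_S: "\<And>k. k < L \<Longrightarrow> deg C m (S k)"
    and F_through: "\<And>f. f \<in> F \<Longrightarrow> factors_through (Z D) f (vertical_map D X R S NX NY)"
  shows "\<And>i. i \<le> L \<Longrightarrow> factors_through D (mreg d i) (R i)"
    "\<And>j. j < K \<Longrightarrow> factors_through D (msing d j) (S (\<delta>!j))"
proof -
  let ?P = "vertical_map D X R S NX NY"
  note acc = vertical_map_acc[where D=D and X=X and R=R and S=S and NX=NX and NY=NY]
  have P: "zig_map D ?P" by (rule vertical_map_zig_map[OF catD X_zig_obj R S NX NY])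
  have "deg C (Suc m) ?P"
    using P acc deg_R deg_S by (intro deg_Suc_if_parallel) (auto simp: parallel_deg_def pi_vertical_def)
  then obtain h where h: "zig_map D h" "mdom h = N" "mcod h = mdom ?P" "zig_comp D ?P h = d"
    using d_least F_through acc(1) unfolding factors_through_def by fastforce
  note lh = zig_map_lengths[OF h(1)]
  have eq: "map (\<lambda>j. [0..<L] ! (msing_map h ! j)) [0..<K] = \<delta>"
    using arg_cong[OF h(4), of msing_map] lh h(2) acc(2) by (simp add: zig_comp_acc)
  have "\<delta>!j = msing_map h ! j" if "j < K" for j
    using arg_cong[OF eq, of "\<lambda>l. l!j"] that lh(3)[of j] h(2,3) acc(3) by simp
  hence \<delta>h: "\<delta> = msing_map h" using lh(1) h(2) \<delta>(1) by (auto intro: nth_equalityI)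
  show "factors_through D (mreg d i) (R i)" if i: "i \<le> L" for i
    using arg_cong[OF h(4), of "\<lambda>x. mreg x i"] i hat_upt[OF i] acc(1,2,4,6) zig_map_acc(4)[OF h(1), of i]
      h(2,3) d_arrs(1)[OF i] \<delta>h acc(3) unfolding factors_through_def
    by (intro bexI[of _ "mreg h i"]) (auto simp: zig_comp_acc arr_def)
  show "factors_through D (msing d j) (S (\<delta>!j))" if j: "j < K" for j
    using arg_cong[OF h(4), of "\<lambda>x. msing x j"] j \<delta>(1,2) acc(5,7) zig_map_acc(5)[OF h(1), of j]
      h(2,3) d_arrs(2)[OF j] \<delta>h lh(1) unfolding factors_through_def
    by (intro bexI[of _ "msing h j"]) (auto simp: zig_comp_acc arr_def)
qed

lemma d_reg_factors:
  assumes R: "\<And>k. k \<le> L \<Longrightarrow> R k \<in> cArr D \<and> cCod D (R k) = zr X k \<and> deg C m (R k)"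
    and F_reg: "\<And>f k. f \<in> F \<Longrightarrow> k \<le> L \<Longrightarrow>
      \<exists>t. arr D t (zr (mdom f) (hat (msing_map f) k)) (cDom D (R k)) \<and> cComp D (R k) t = mreg f k"
    and i: "i \<le> L"
  shows "factors_through D (mreg d i) (R i)"
proof -
  have R': "R k \<in> cArr D \<and> cCod D (R k) = zr X k" "deg C m (R k)" if "k \<le> L" for k
    using R[OF that] by auto
  let ?S = "\<lambda>k. cId D (zs X k)" and ?NX = "\<lambda>k. cComp D (zx X k) (R k)"
    and ?NY = "\<lambda>k. cComp D (zy X k) (R (Suc k))"
  have S: "?S k \<in> cArr D \<and> cCod D (?S k) = zs X k" "cDom D (?S k) = zs X k" "deg C m (?S k)"
    if "k < L" for k
    using cat_id[OF catD X_obj(2)[OF that]] iso_deg[OF cat iso_id[OF catD X_obj(2)[OF that]]]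
    by (auto simp: arr_def)
  have NX: "arr D (?NX k) (cDom D (R k)) (cDom D (?S k)) \<and> cComp D (?S k) (?NX k) = cComp D (zx X k) (R k)"
    if k: "k < L" for k
  proof -
    have "arr D (?NX k) (cDom D (R k)) (zs X k)" using cat_comp[OF catD _ X_obj(3)[OF k]] R k by (simp add: arr_def)
    thus ?thesis using S(2)[OF k] cat_idl[OF catD] by simp
  qed
  have NY: "arr D (?NY k) (cDom D (R (Suc k))) (cDom D (?S k)) \<and>
      cComp D (?S k) (?NY k) = cComp D (zy X k) (R (Suc k))" if k: "k < L" for k
  proof -
    have "arr D (?NY k) (cDom D (R (Suc k))) (zs X k)"
      using cat_comp[OF catD _ X_obj(4)[OF k]] R[of "Suc k"] k by (simp add: arr_def)
    thus ?thesis using S(2)[OF k] cat_idl[OF catD] by simp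
  qed
  note acc = vertical_map_acc[where D=D and X=X and R=R and S="?S" and NX="?NX" and NY="?NY"]
  have "factors_through (Z D) f (vertical_map D X R ?S ?NX ?NY)" if f: "f \<in> F" for f
  proof (rule factors_through_vertical[OF catD vertical_map_zig_map[OF catD X_zig_obj R'(1) S(1) NX NY]])
    show "pi_vertical (vertical_map D X R ?S ?NX ?NY)" using acc by (simp add: pi_vertical_def)
    show "\<And>k. k < zlen (mcod (vertical_map D X R ?S ?NX ?NY)) \<Longrightarrow> monic D (msing (vertical_map D X R ?S ?NX ?NY) k)"
      using acc S(3) deg_monic[OF cat] by auto
    show "\<And>i. i \<le> zlen (mcod (vertical_map D X R ?S ?NX ?NY)) \<Longrightarrow>
      \<exists>t. arr D t (zr (mdom f) (hat (msing_map f) i)) (cDom D (mreg (vertical_map D X R ?S ?NX ?NY) i)) \<and>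
        cComp D (mreg (vertical_map D X R ?S ?NX ?NY) i) t = mreg f i"
      using F_reg[OF f] acc by simp
    fix p assume p: "p < zlen (mdom f)"
    have af: "arr D (msing f p) (zs (mdom f) p) (zs X (msing_map f ! p))" and lt: "msing_map f ! p < L"
      using zig_map_acc(5)[OF F_maps(1)[OF f] p] zig_map_lengths(3)[OF F_maps(1)[OF f] p] F_maps(2)[OF f]
      by auto
    show "\<exists>u. arr D u (zs (mdom f) p) (cDom D (msing (vertical_map D X R ?S ?NX ?NY) (msing_map f ! p))) \<and>
        cComp D (msing (vertical_map D X R ?S ?NX ?NY) (msing_map f ! p)) u = msing f p"
      using af lt acc(5) S(2)[OF lt] cat_idl[OF catD af] by (intro exI[of _ "msing f p"]) simp
  qed (use F_maps[OF f] acc in auto)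
  thus ?thesis using d_factors_through_vertical(1)[OF R'(1) S(1) NX NY R'(2) S(3) _ i] by blast
qed

lemma reg_slice_normalising:
  assumes i: "i \<le> L"
  shows "normalising C m (mreg d i)"
  unfolding normalising_def
proof (intro conjI allI impI)
  show "deg C m (mreg d i)" using d_reg_deg[OF i] .
  fix e assume e: "deg C m e \<and> cCod D e = cCod D (mreg d i)"
  have eD: "deg C m e" and ce: "cCod D e = zr X i" and eA: "e \<in> cArr D"
    using e d_arrs(1)[OF i] deg_monic[OF cat] by (auto simp: arr_def)
  define R where "R k = (if k = i then e else cId D (zr X k))" for k
  have "factors_through D (mreg d i) (R i)"
  proof (rule d_reg_factors[OF _ _ i])
    show "R k \<in> cArr D \<and> cCod D (R k) = zr X k \<and> deg C m (R k)" if "k \<le> L" for k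
      using eD ce eA cat_id[OF catD X_obj(1)[OF that]] iso_deg[OF cat iso_id[OF catD X_obj(1)[OF that]]]
      unfolding R_def by (auto simp: arr_def)
    fix f k assume f: "f \<in> F" and k: "k \<le> L"
    have af: "arr D (mreg f k) (zr (mdom f) (hat (msing_map f) k)) (zr X k)"
      using zig_map_acc(4)[OF F_maps(1)[OF f]] F_maps(2)[OF f] k by auto
    show "\<exists>t. arr D t (zr (mdom f) (hat (msing_map f) k)) (cDom D (R k)) \<and> cComp D (R k) t = mreg f k"
    proof (cases "k = i")
      case True
      hence "factors_through D (mreg f k) e"
        using F_maps(3)[OF f k] eD ce af unfolding normalising_def by (auto simp: arr_def)
      thus ?thesis using True af unfolding R_def factors_through_def by (auto simp: arr_def)
    next
      case False
      thus ?thesis using af cat_idl[OF catD af] cat_id[OF catD X_obj(1)[OF k]] unfolding R_def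
        by (intro exI[of _ "mreg f k"]) (auto simp: arr_def)
    qed
  qed
  thus "factors_through D (mreg d i) e" unfolding R_def by simp
qed

lemma normalising_globular:
  assumes "normalising C m e" "cCod D e = Y" "Y \<in> cObj D" "globular_obj C m Y"
  shows "globular_obj C m (cDom D e) \<and> reg_normalising C m e"
proof -
  have "rel_normalisation C m Y ({} :: ('o, 'm) zm set) (\<lambda>x. x) e"
    using assms unfolding normalising_def rel_normalisation_def by simp
  thus ?thesis using IH[of Y "{}" e] assms unfolding reg_normalising_sink_def globular_normalisation_def
    by simp
qed

lemma reg_slice_globular:
  assumes i: "i \<le> L"
  shows "globular_obj C m (cDom D (mreg d i)) \<and> reg_normalising C m (mreg d i)"
  using normalising_globular[OF reg_slice_normalising[OF i]] X_obj(1)[OF i] X_glob(1)[OF i] d_arrs(1)[OF i]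
  by (simp add: arr_def)

lemma d_sing_factors:
  assumes S: "\<And>k. k < L \<Longrightarrow> S k \<in> cArr D \<and> cCod D (S k) = zs X k \<and> deg C m (S k)"
    and NX: "\<And>k. k < L \<Longrightarrow> arr D (NX k) (cDom D (mreg d k)) (cDom D (S k)) \<and>
      cComp D (S k) (NX k) = cComp D (zx X k) (mreg d k)"
    and NY: "\<And>k. k < L \<Longrightarrow> arr D (NY k) (cDom D (mreg d (Suc k))) (cDom D (S k)) \<and>
      cComp D (S k) (NY k) = cComp D (zy X k) (mreg d (Suc k))"
    and F_sing: "\<And>f p. f \<in> F \<Longrightarrow> p < zlen (mdom f) \<Longrightarrow>
      \<exists>u. arr D u (zs (mdom f) p) (cDom D (S (msing_map f ! p))) \<and> cComp D (S (msing_map f ! p)) u = msing f p"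
    and j: "j < K"
  shows "factors_through D (msing d j) (S (\<delta>!j))"
proof -
  have R: "mreg d k \<in> cArr D \<and> cCod D (mreg d k) = zr X k" "deg C m (mreg d k)" if "k \<le> L" for k
    using d_arrs(1)[OF that] d_reg_deg[OF that] by (auto simp: arr_def)
  have S': "S k \<in> cArr D \<and> cCod D (S k) = zs X k" "deg C m (S k)" if "k < L" for k
    using S[OF that] by auto
  let ?P = "vertical_map D X (mreg d) S NX NY"
  note acc = vertical_map_acc[where D=D and X=X and R="mreg d" and S=S and NX=NX and NY=NY]
  have "factors_through (Z D) f ?P" if f: "f \<in> F" for f
  proof -
    obtain g where g: "zig_map D g" "mdom g = mdom f" "mcod g = N" "zig_comp D d g = f"
      using F_factorisation[OF f] .
    note gf = F_factorisation_slices[OF g(1,3,4)]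
    show ?thesis
    proof (rule factors_through_vertical[OF catD vertical_map_zig_map[OF catD X_zig_obj R(1) S'(1) NX NY]])
      show "pi_vertical ?P" using acc by (simp add: pi_vertical_def)
      show "\<And>k. k < zlen (mcod ?P) \<Longrightarrow> monic D (msing ?P k)" using acc S'(2) deg_monic[OF cat] by auto
      fix i assume "i \<le> zlen (mcod ?P)"
      hence i: "i \<le> L" using acc by simp
      have "hat \<delta> i \<le> zlen (mcod g)" using hat_le[of \<delta> i] \<delta>(1) g(3) by simp
      hence "arr D (mreg g (hat \<delta> i)) (zr (mdom f) (hat (msing_map f) i)) (zr N (hat \<delta> i))"
        using zig_map_acc(4)[OF g(1)] g(2,3) gf(4) by simp
      thus "\<exists>t. arr D t (zr (mdom f) (hat (msing_map f) i)) (cDom D (mreg ?P i)) \<and>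
          cComp D (mreg ?P i) t = mreg f i"
        using d_arrs(1)[OF i] gf(2)[OF i] acc(4)[OF i] by (intro exI[of _ "mreg g (hat \<delta> i)"]) (simp add: arr_def)
    next
      fix p assume p: "p < zlen (mdom f)"
      show "\<exists>u. arr D u (zs (mdom f) p) (cDom D (msing ?P (msing_map f ! p))) \<and>
          cComp D (msing ?P (msing_map f ! p)) u = msing f p"
        using F_sing[OF f p] acc(5) zig_map_lengths(3)[OF F_maps(1)[OF f] p] F_maps(2)[OF f] by simp
    qed (use F_maps[OF f] acc in auto)
  qed
  thus ?thesis using d_factors_through_vertical(2)[OF R(1) S'(1) NX NY R(2) S'(2) _ j] by blast
qed

text \<open>The singular slice of \<open>d\<close> at height \<open>j\<close> is the relative normalisation of the singular
  object of \<open>X\<close> above it with respect to this sink: the two legs of \<open>N\<close> at \<open>j\<close>, pushed into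
  \<open>X\<close>, together with the singular slices of the maps in \<open>F\<close> lying over the same height.\<close>

definition "sink j = {cComp D (zx X (\<delta>!j)) (mreg d (\<delta>!j)), cComp D (zy X (\<delta>!j)) (mreg d (Suc (\<delta>!j)))} \<union>
  {msing f p | f p. f \<in> F \<and> p < zlen (mdom f) \<and> msing_map f ! p = \<delta>!j}"

lemma sink_legs_arr:
  assumes j: "j < K"
  shows "arr D (cComp D (zx X (\<delta>!j)) (mreg d (\<delta>!j))) (zr N j) (zs X (\<delta>!j))"
    "arr D (cComp D (zy X (\<delta>!j)) (mreg d (Suc (\<delta>!j)))) (zr N (Suc j)) (zs X (\<delta>!j))"
  using cat_comp[OF catD d_arrs(1) X_obj(3)[OF \<delta>(2)[OF j]]] cat_comp[OF catD d_arrs(1) X_obj(4)[OF \<delta>(2)[OF j]]]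
    \<delta>(2-4)[OF j] by auto

lemma F_sing_index:
  assumes f: "f \<in> F" and g: "zig_map D g" "mdom g = mdom f" "mcod g = N" "zig_comp D d g = f"
    and p: "p < zlen (mdom f)"
  shows "msing_map g ! p < K" "msing_map f ! p = \<delta> ! (msing_map g ! p)"
  using F_factorisation_slices[OF g(1,3,4)] g(2) p zig_map_lengths(1)[OF g(1)] by auto

lemma sink_factors:
  assumes j: "j < K" and s: "s \<in> sink j"
  shows "factors_through D s (msing d j)"
proof -
  from s consider (x) "s = cComp D (zx X (\<delta>!j)) (mreg d (\<delta>!j))"
    | (y) "s = cComp D (zy X (\<delta>!j)) (mreg d (Suc (\<delta>!j)))"
    | (f) f p where "f \<in> F" "p < zlen (mdom f)" "msing_map f ! p = \<delta>!j" "s = msing f p"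
    unfolding sink_def by blast
  then show ?thesis
  proof cases
    case x thus ?thesis unfolding factors_through_def
      using N_legs(1)[OF j] d_arrs(2)[OF j] d_squares(1)[OF j] sink_legs_arr(1)[OF j]
      by (intro bexI[of _ "zx N j"]) (auto simp: arr_def)
  next
    case y thus ?thesis unfolding factors_through_def
      using N_legs(2)[OF j] d_arrs(2)[OF j] d_squares(2)[OF j] sink_legs_arr(2)[OF j]
      by (intro bexI[of _ "zy N j"]) (auto simp: arr_def)
  next
    case (f f p)
    obtain g where g: "zig_map D g" "mdom g = mdom f" "mcod g = N" "zig_comp D d g = f"
      using F_factorisation[OF f(1)] .
    have gp: "msing_map g ! p = j"
      using F_sing_index[OF f(1) g f(2)] sorted_wrt_less_inj[OF \<delta>_strict] \<delta>(1) j f(3) by auto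
    have pg: "p < zlen (mdom g)" using f(2) g(2) by simp
    have ag: "arr D (msing g p) (zs (mdom f) p) (zs N j)" using zig_map_acc(5)[OF g(1) pg] g(2,3) gp by simp
    show ?thesis unfolding factors_through_def
      using ag d_arrs(2)[OF j] cat_comp[OF catD ag d_arrs(2)[OF j]] F_factorisation_slices(3)[OF g(1,3,4)]
        g(2) f(2,4) gp
      by (intro bexI[of _ "msing g p"]) (auto simp: arr_def)
  qed
qed

lemma sing_slice_least:
  assumes j: "j < K" and e: "deg C m e" "cCod D e = zs X (\<delta>!j)" "\<forall>s\<in>sink j. factors_through D s e"
  shows "factors_through D (msing d j) e"
proof -
  let ?k = "\<delta>!j"
  have eA: "e \<in> cArr D" using deg_monic[OF cat e(1)] by simp
  obtain nx where nx: "arr D nx (zr N j) (cDom D e)" "cComp D e nx = cComp D (zx X ?k) (mreg d ?k)"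
    using e(3) sink_legs_arr(1)[OF j] unfolding sink_def factors_through_def arr_def by auto
  obtain ny where ny: "arr D ny (zr N (Suc j)) (cDom D e)" "cComp D e ny = cComp D (zy X ?k) (mreg d (Suc ?k))"
    using e(3) sink_legs_arr(2)[OF j] unfolding sink_def factors_through_def arr_def by auto
  define S where "S k = (if k = ?k then e else cId D (zs X k))" for k
  define NX where "NX k = (if k = ?k then nx else cComp D (zx X k) (mreg d k))" for k
  define NY where "NY k = (if k = ?k then ny else cComp D (zy X k) (mreg d (Suc k)))" for k
  have idS: "cDom D (S k) = zs X k" "cComp D (S k) a = a" if "k < L" "k \<noteq> ?k" "arr D a x (zs X k)" for k a x
    using that cat_id[OF catD X_obj(2)[OF that(1)]] cat_idl[OF catD that(3)] unfolding S_def by (auto simp: arr_def)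
  have "factors_through D (msing d j) (S ?k)"
  proof (rule d_sing_factors[OF _ _ _ _ j])
    show "S k \<in> cArr D \<and> cCod D (S k) = zs X k \<and> deg C m (S k)" if "k < L" for k
      using e eA cat_id[OF catD X_obj(2)[OF that]] iso_deg[OF cat iso_id[OF catD X_obj(2)[OF that]]]
      unfolding S_def by (auto simp: arr_def)
    show "arr D (NX k) (cDom D (mreg d k)) (cDom D (S k)) \<and> cComp D (S k) (NX k) = cComp D (zx X k) (mreg d k)"
      if k: "k < L" for k
      using nx d_arrs(1)[of k] \<delta>(3)[OF j] cat_comp[OF catD d_arrs(1) X_obj(3)[OF k]] idS[OF k] k
      unfolding NX_def by (cases "k = ?k") (auto simp: S_def arr_def)
    show "arr D (NY k) (cDom D (mreg d (Suc k))) (cDom D (S k)) \<and>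
        cComp D (S k) (NY k) = cComp D (zy X k) (mreg d (Suc k))" if k: "k < L" for k
      using ny d_arrs(1)[of "Suc k"] \<delta>(4)[OF j] cat_comp[OF catD d_arrs(1) X_obj(4)[OF k]] idS[OF k] k
      unfolding NY_def by (cases "k = ?k") (auto simp: S_def arr_def)
    fix f p assume f: "f \<in> F" and p: "p < zlen (mdom f)"
    have af: "arr D (msing f p) (zs (mdom f) p) (zs X (msing_map f ! p))" and lt: "msing_map f ! p < L"
      using zig_map_acc(5)[OF F_maps(1)[OF f] p] zig_map_lengths(3)[OF F_maps(1)[OF f] p] F_maps(2)[OF f]
      by auto
    show "\<exists>u. arr D u (zs (mdom f) p) (cDom D (S (msing_map f ! p))) \<and> cComp D (S (msing_map f ! p)) u = msing f p"
    proof (cases "msing_map f ! p = ?k")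
      case True
      hence "factors_through D (msing f p) e" using e(3) f p unfolding sink_def by blast
      thus ?thesis using True af unfolding S_def factors_through_def by (auto simp: arr_def)
    next
      case False
      thus ?thesis using af idS[OF lt False af] by (intro exI[of _ "msing f p"]) (simp add: arr_def)
    qed
  qed
  thus ?thesis unfolding S_def by simp
qed

lemma sing_slice_rel_normalisation:
  assumes j: "j < K"
  shows "rel_normalisation C m (zs X (\<delta>!j)) (sink j) (\<lambda>x. x) (msing d j)"
  unfolding rel_normalisation_def
  using d_sing_deg[OF j] d_arrs(2)[OF j] sink_factors[OF j] sing_slice_least[OF j] by (auto simp: arr_def)

lemma sink_reg_normalising:
  assumes j: "j < K"
  shows "reg_normalising_sink C m (zs X (\<delta>!j)) (sink j)"
  unfolding reg_normalising_sink_def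
proof
  let ?k = "\<delta>!j"
  have k: "?k < L" using \<delta>(2)[OF j] .
  fix s assume "s \<in> sink j"
  then consider (x) "s = cComp D (zx X ?k) (mreg d ?k)" | (y) "s = cComp D (zy X ?k) (mreg d (Suc ?k))"
    | (f) f p where "f \<in> F" "p < zlen (mdom f)" "msing_map f ! p = ?k" "s = msing f p"
    unfolding sink_def by blast
  then show "s \<in> cArr D \<and> cCod D s = zs X ?k \<and> reg_normalising C m s"
  proof cases
    case x
    thus ?thesis using reg_normalising_globular_comp[OF cat] X_glob(2)[OF k] reg_slice_globular[of ?k]
      X_obj(3)[OF k] d_arrs(1)[of ?k] sink_legs_arr(1)[OF j] k by (simp add: arr_def)
  next
    case y
    thus ?thesis using reg_normalising_globular_comp[OF cat] X_glob(2)[OF k] reg_slice_globular[of "Suc ?k"]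
      X_obj(4)[OF k] d_arrs(1)[of "Suc ?k"] sink_legs_arr(2)[OF j] k by (simp add: arr_def)
  next
    case (f f p)
    thus ?thesis using zig_map_acc(5)[OF F_maps(1)[OF f(1)] f(2)] F_maps[OF f(1)] by (simp add: arr_def)
  qed
qed

lemma sing_slice_globular:
  assumes j: "j < K"
  shows "globular_normalisation C m (sink j) (msing d j)"
  using IH[OF X_obj(2) _ sink_reg_normalising[OF j] sing_slice_rel_normalisation[OF j]] X_glob(2) \<delta>(2)[OF j]
  by blast

lemma sink_factor_globular:
  assumes j: "j < K" and s: "s \<in> sink j" and g: "arr D g (cDom D s) (zs N j)" "cComp D (msing d j) g = s"
  shows "globular_map C m g"
  using sing_slice_globular[OF j] s g d_arrs(2)[OF j] unfolding globular_normalisation_def arr_def by auto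

lemma N_globular: "globular_obj C (Suc m) N"
  unfolding globular_obj.simps
proof (intro conjI allI impI)
  fix q assume "q \<le> K"
  then obtain i where i: "i \<le> L" "hat \<delta> i = q" using hat_surj[OF \<delta>_strict, of L q] \<delta>(1,2) by auto
  thus "globular_obj C m (zr N q)" using reg_slice_globular[OF i(1)] d_arrs(1)[OF i(1)] by (simp add: arr_def)
next
  fix j assume j: "j < K"
  show "globular_obj C m (zs N j)"
    using sing_slice_globular[OF j] d_arrs(2)[OF j] unfolding globular_normalisation_def by (simp add: arr_def)
  show "globular_map C m (zx N j)"
    using sink_factor_globular[OF j _ _ d_squares(1)[OF j]] N_legs(1)[OF j] sink_legs_arr(1)[OF j]
    unfolding sink_def by (simp add: arr_def)
  show "globular_map C m (zy N j)"
    using sink_factor_globular[OF j _ _ d_squares(2)[OF j]] N_legs(2)[OF j] sink_legs_arr(2)[OF j]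
    unfolding sink_def by (simp add: arr_def)
qed

lemma d_reg_normalising: "reg_normalising C (Suc m) d"
  using reg_slice_normalising sing_slice_globular d_cod unfolding globular_normalisation_def by simp

lemma F_factor_globular:
  assumes f: "f \<in> F" and g: "zig_map D g" "mdom g = mdom f" "mcod g = N" "zig_comp D d g = f"
  shows "globular_map C (Suc m) g"
  unfolding globular_map.simps
proof (intro conjI allI impI)
  note gf = F_factorisation_slices[OF g(1,3,4)]
  fix q assume "q \<le> zlen (mcod g)"
  then obtain i where i: "i \<le> L" "hat \<delta> i = q" using hat_surj[OF \<delta>_strict, of L q] \<delta>(1,2) g(3) by auto
  have ag: "arr D (mreg g q) (zr (mdom f) (hat (msing_map f) i)) (zr N q)"
    using zig_map_acc(4)[OF g(1)] i \<delta>(1) hat_le[of \<delta> i] g(2,3) gf(4) by auto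
  have ad: "arr D (mreg d i) (zr N q) (zr X i)" using d_arrs(1)[OF i(1)] i(2) by simp
  have "mreg f i = cComp D (mreg d i) (mreg g q)" using gf(2)[OF i(1)] i(2) by simp
  thus "iso D (mreg g q)"
    using normalising_factor_iso[OF cat F_maps(3)[OF f i(1)] reg_slice_normalising[OF i(1)]]
      cat_comp[OF catD ag ad] ag ad by (simp add: arr_def)
next
  note gf = F_factorisation_slices[OF g(1,3,4)]
  fix p assume p: "p < zlen (mdom g)"
  have "p < zlen (mdom f)" "msing_map f ! p = \<delta> ! (msing_map g ! p)"
    using p g(2) F_sing_index(2)[OF f g] by auto
  hence mem: "msing f p \<in> sink (msing_map g ! p)" using f unfolding sink_def by blast
  have "arr D (msing g p) (cDom D (msing f p)) (zs N (msing_map g ! p))"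
    using zig_map_acc(5)[OF g(1) p] zig_map_acc(5)[OF F_maps(1)[OF f]] g(2,3) p by (simp add: arr_def)
  thus "globular_map C m (msing g p)"
    using sink_factor_globular[OF gf(5)[OF p] mem _ gf(3)[OF p, symmetric]] by blast
qed

lemma globular_normalisation_Suc: "globular_normalisation C (Suc m) F d"
  unfolding globular_normalisation_def
  using N_globular d_reg_normalising F_factor_globular by auto

end

theorem rel_normalisation_globular:
  assumes cat: "is_category C"
  shows "X \<in> cObj (Zn C n) \<Longrightarrow> globular_obj C n X \<Longrightarrow> reg_normalising_sink C n X F \<Longrightarrow>
    rel_normalisation C n X F (\<lambda>x. x) d \<Longrightarrow> globular_normalisation C n F d"
proof (induction n arbitrary: X F d)
  case 0
  thus ?case by (simp add: globular_normalisation_def)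
next
  case (Suc m)
  interpret normalisation_step C m X F d using cat Suc by unfold_locales auto
  show ?case by (rule globular_normalisation_Suc)
qed

theorem lemma6p3:
  fixes C :: "('o, 'm) cat" and n :: nat and X :: "('o, 'm) zo"
    and I :: "'i set" and f g :: "'i \<Rightarrow> ('o, 'm) zm" and d :: "('o, 'm) zm"
  assumes "is_category C"
    and "X \<in> cObj (Zn C n)"
    and "globular_obj C n X"
    and "\<forall>i \<in> I. f i \<in> cArr (Zn C n) \<and> cCod (Zn C n) (f i) = X \<and> reg_normalising C n (f i)"
    and "rel_normalisation C n X I f d"
    and "\<forall>i \<in> I. g i \<in> cArr (Zn C n) \<and> cDom (Zn C n) (g i) = cDom (Zn C n) (f i) \<and>
                 cCod (Zn C n) (g i) = cDom (Zn C n) d \<and> cComp (Zn C n) d (g i) = f i"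
  shows "globular_obj C n (cDom (Zn C n) d) \<and> (\<forall>i \<in> I. globular_map C n (g i)) \<and>
         reg_normalising C n d"
proof -
  have "reg_normalising_sink C n X (f ` I)"
    using assms(4) unfolding reg_normalising_sink_def by blast
  moreover have "rel_normalisation C n X (f ` I) (\<lambda>x. x) d"
    using assms(5) unfolding rel_normalisation_def by blast
  ultimately have "globular_normalisation C n (f ` I) d"
    using rel_normalisation_globular[OF assms(1-3)] by blast
  thus ?thesis using assms(6) unfolding globular_normalisation_def by blast
qed

end
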